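(* Let $F$ be a field of characteristic two and let $\mathfrak b$ be a bilinear $n$-fold Pfister form over $F$. If $\alpha\in Q(\mathfrak b)\setminus F^2$, then $\mathfrak i(\mathfrak b_{F(\sqrt\alpha)})=\mathfrak i(\mathfrak b)+1$.
   Context: A bilinear $n$-fold Pfister form is $\langle\!\langle\alpha_1,\dots,\alpha_n\rangle\!\rangle=\langle1,\alpha_1\rangle\otimes\cdots\otimes\langle1,\alpha_n\rangle$ with $\alpha_i\in F^\times$; $\langle\!\langle1\rangle\!\rangle^r$ denotes $\langle\!\langle1,\dots,1\rangle\!\rangle$ ($r$-fold), $\langle\!\langle1\rangle\!\rangle^0=\langle1\rangle$. Every bilinear Pfister form $\mathfrak b$ is isometric to $\langle\!\langle1\rangle\!\rangle^r\otimes\mathfrak b'$ for some integer $r\ge0$ and anisotropic bilinear Pfister form $\mathfrak b'$; this $r$ is denoted $\mathfrak i(\mathfrak b)$. $Q(\mathfrak b)=\{\mathfrak b(v,v)\mid v\ne0\}\cup\{0\}$. $\mathfrak b_K$ denotes scalar extension to $K$. *)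

theory Defs
  imports Main
begin

text \<open>Setting: an ambient field of type 'a; the base field F is a subfield S of it,
  given as a set. Bilinear forms of dimension m over S are represented by Gram
  matrices G :: nat => nat => 'a (indices < m) with entries in S.\<close>

definition is_subfield :: "'a::field set \<Rightarrow> bool" where
  "is_subfield S \<longleftrightarrow> 0 \<in> S \<and> 1 \<in> S \<and>
     (\<forall>x\<in>S. \<forall>y\<in>S. x + y \<in> S \<and> x * y \<in> S) \<and>
     (\<forall>x\<in>S. - x \<in> S) \<and> (\<forall>x\<in>S. x \<noteq> 0 \<longrightarrow> inverse x \<in> S)"

definition adjoin :: "'a::field set \<Rightarrow> 'a \<Rightarrow> 'a set" where
  "adjoin S s = \<Inter>{T. is_subfield T \<and> S \<subseteq> T \<and> s \<in> T}"

definition bval :: "nat \<Rightarrow> (nat \<Rightarrow> nat \<Rightarrow> 'a::field) \<Rightarrow> (nat \<Rightarrow> 'a) \<Rightarrow> (nat \<Rightarrow> 'a) \<Rightarrow> 'a" where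
  "bval m G v w = (\<Sum>i<m. \<Sum>j<m. v i * G i j * w j)"

definition vec_on :: "'a set \<Rightarrow> nat \<Rightarrow> (nat \<Rightarrow> 'a) \<Rightarrow> bool" where
  "vec_on S m v \<longleftrightarrow> (\<forall>i<m. v i \<in> S)"

definition nonzero_vec :: "nat \<Rightarrow> (nat \<Rightarrow> 'a::zero) \<Rightarrow> bool" where
  "nonzero_vec m v \<longleftrightarrow> (\<exists>i<m. v i \<noteq> 0)"

definition anisotropic_on :: "'a::field set \<Rightarrow> nat \<Rightarrow> (nat \<Rightarrow> nat \<Rightarrow> 'a) \<Rightarrow> bool" where
  "anisotropic_on S m G \<longleftrightarrow> (\<forall>v. vec_on S m v \<and> nonzero_vec m v \<longrightarrow> bval m G v v \<noteq> 0)"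

definition Q_on :: "'a::field set \<Rightarrow> nat \<Rightarrow> (nat \<Rightarrow> nat \<Rightarrow> 'a) \<Rightarrow> 'a set" where
  "Q_on S m G = {bval m G v v | v. vec_on S m v \<and> nonzero_vec m v} \<union> {0}"

definition iso_on :: "'a::field set \<Rightarrow> nat \<Rightarrow> (nat \<Rightarrow> nat \<Rightarrow> 'a) \<Rightarrow> (nat \<Rightarrow> nat \<Rightarrow> 'a) \<Rightarrow> bool" where
  "iso_on S m G H \<longleftrightarrow> (\<exists>P Q.
     (\<forall>i<m. \<forall>j<m. P i j \<in> S \<and> Q i j \<in> S) \<and>
     (\<forall>i<m. \<forall>j<m. (\<Sum>k<m. P i k * Q k j) = (if i = j then 1 else 0)) \<and>
     (\<forall>i<m. \<forall>j<m. (\<Sum>k<m. \<Sum>l<m. P k i * G k l * P l j) = H i j))"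

definition diag_gram :: "'a::zero list \<Rightarrow> nat \<Rightarrow> nat \<Rightarrow> 'a" where
  "diag_gram as i j = (if i = j then as ! i else 0)"

text \<open>Diagonal entries of <<a1,...,an>> = <1,a1> (x) ... (x) <1,an>.\<close>
fun pfister_list :: "'a::monoid_mult list \<Rightarrow> 'a list" where
  "pfister_list [] = [1]"
| "pfister_list (a # as) = pfister_list as @ map (\<lambda>x. a * x) (pfister_list as)"

definition pf_gram :: "'a::{monoid_mult,zero} list \<Rightarrow> nat \<Rightarrow> nat \<Rightarrow> 'a" where
  "pf_gram as = diag_gram (pfister_list as)"

text \<open>i(b) for b = <<as>> considered over S: the r with
  b \<cong> <<1>>^r (x) b', b' = <<bs>> an anisotropic bilinear Pfister form over S.
  Note <<1>>^r (x) <<bs>> = <<1,...,1,bs>>.\<close>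
definition pf_index :: "'a::field set \<Rightarrow> 'a list \<Rightarrow> nat" where
  "pf_index S as = (THE r. \<exists>bs. set bs \<subseteq> S - {0} \<and> r + length bs = length as \<and>
      anisotropic_on S (2 ^ length bs) (pf_gram bs) \<and>
      iso_on S (2 ^ length as) (pf_gram as) (pf_gram (replicate r 1 @ bs)))"

end

theory Submission
  imports Defs "HOL-Combinatorics.Permutations"
begin

text \<open>In characteristic two the diagonal form with entries d_i has value set
  {sum of v_i^2 d_i}, the F^2-span of the d_i, and it is anisotropic iff the d_i are
  F^2-linearly independent; so anisotropic forms with equal value sets have equal
  dimension. The value set of a Pfister form b is moreover closed under products and
  inverses (Pfister forms are multiplicative), hence every nonzero value x makes
  x b isometric to b. This yields the decomposition of <<a, as>> as <<1>>^(r+1) (x) b'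
  or <<1>>^r (x) <<a>> (x) b', according as a is a value of the anisotropic part b'
  of <<as>> or not, and shows that i(b) is determined by the value set of b.

  Over K = F(sqrt alpha) the value set of b is Q(b) + alpha Q(b) = Q(b), because
  alpha lies in Q(b). If b_K is isometric to <<1>>^r (x) c with c anisotropic over K,
  then <<alpha>> (x) c is anisotropic over F (an isotropic vector (v, w) would give the
  K-isotropic vector v + sqrt alpha w of c) and has value set Q(c) + alpha Q(c) = Q(b);
  so it is the anisotropic part of b over F, which therefore has one dimension more
  than c.\<close>

lemma char2_two_eq_zero: "CHAR('a::field) = 2 \<Longrightarrow> (2::'a) = 0"
  by (metis of_nat_CHAR of_nat_numeral)

lemma char2_add_self: "CHAR('a::field) = 2 \<Longrightarrow> (x::'a) + x = 0"
  by (metis char2_two_eq_zero mult_2 mult_zero_left)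

lemma char2_minus_eq: "CHAR('a::field) = 2 \<Longrightarrow> - (x::'a) = x"
  by (metis add_eq_0_iff char2_add_self)

lemma char2_power2_add: "CHAR('a::field) = 2 \<Longrightarrow> ((x::'a) + y)^2 = x^2 + y^2"
proof -
  assume c: "CHAR('a) = 2"
  have "(x + y)^2 = x^2 + y^2 + 2*x*y" by (simp add: power2_eq_square algebra_simps)
  then show ?thesis using char2_two_eq_zero[OF c] by simp
qed

lemma char2_power2_sum: "CHAR('a::field) = 2 \<Longrightarrow> (\<Sum>i\<in>A. (f i::'a))^2 = (\<Sum>i\<in>A. (f i)^2)"
proof (induction A rule: infinite_finite_induct)
  case (insert x F) then show ?case by (simp add: char2_power2_add)
qed auto

lemma subfield_zero: "is_subfield S \<Longrightarrow> 0 \<in> S"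
  by (simp add: is_subfield_def)

lemma subfield_one: "is_subfield S \<Longrightarrow> 1 \<in> S"
  by (simp add: is_subfield_def)

lemma subfield_add: "is_subfield S \<Longrightarrow> x \<in> S \<Longrightarrow> y \<in> S \<Longrightarrow> x + y \<in> S"
  by (simp add: is_subfield_def)

lemma subfield_mult: "is_subfield S \<Longrightarrow> x \<in> S \<Longrightarrow> y \<in> S \<Longrightarrow> x * y \<in> S"
  by (simp add: is_subfield_def)

lemma subfield_uminus: "is_subfield S \<Longrightarrow> x \<in> S \<Longrightarrow> - x \<in> S"
  by (simp add: is_subfield_def)

lemma subfield_diff: "is_subfield S \<Longrightarrow> x \<in> S \<Longrightarrow> y \<in> S \<Longrightarrow> x - y \<in> S"
  by (metis diff_conv_add_uminus subfield_add subfield_uminus)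

lemma subfield_inverse: "is_subfield S \<Longrightarrow> x \<in> S \<Longrightarrow> inverse x \<in> S"
  by (cases "x = 0") (auto simp: is_subfield_def)

lemma subfield_divide: "is_subfield S \<Longrightarrow> x \<in> S \<Longrightarrow> y \<in> S \<Longrightarrow> x / y \<in> S"
  by (simp add: divide_inverse subfield_inverse subfield_mult)

lemma subfield_sum: "is_subfield S \<Longrightarrow> (\<And>i. i \<in> A \<Longrightarrow> f i \<in> S) \<Longrightarrow> sum f A \<in> S"
proof (induction A rule: infinite_finite_induct)
  case (insert x F) then show ?case by (simp add: subfield_add)
qed (auto simp: subfield_zero)

section \<open>Diagonal forms\<close>

lemma sum_lessThan_add: "(\<Sum>i<a+(b::nat). f i) = (\<Sum>i<a. f i) + (\<Sum>i<b. f (i + a))"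
  by (induction b) (auto simp: add.commute add.left_commute)

definition vec_shift :: "nat \<Rightarrow> (nat \<Rightarrow> 'a) \<Rightarrow> nat \<Rightarrow> 'a" where
  "vec_shift k v = (\<lambda>i. v (i + k))"

lemma vec_shift_apply [simp]: "vec_shift k v i = v (i + k)"
  by (simp add: vec_shift_def)

definition unit_vec :: "nat \<Rightarrow> nat \<Rightarrow> 'a::field" where
  "unit_vec k = (\<lambda>i. if i = k then 1 else 0)"

lemma vec_on_unit_vec: "is_subfield S \<Longrightarrow> vec_on S m (unit_vec k)"
  by (simp add: vec_on_def unit_vec_def subfield_zero subfield_one)

lemma sum_unit_vec_left: "k < m \<Longrightarrow> (\<Sum>i<m. unit_vec k i * f i) = (f k::'a::field)"
proof -
  assume "k < m"
  moreover have "(\<Sum>i<m. unit_vec k i * f i) = (\<Sum>i<m. if i = k then f i else 0)"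
    by (intro sum.cong) (auto simp: unit_vec_def)
  ultimately show ?thesis by simp
qed

lemma sum_mult_unit_vec: "k < m \<Longrightarrow> (\<Sum>i<m. f i * unit_vec k i) = (f k::'a::field)"
  using sum_unit_vec_left[of k m f] by (simp add: mult.commute)

lemma sum_unit_vec_right: "k < m \<Longrightarrow> (\<Sum>i<m. f i * unit_vec i k) = (f k::'a::field)"
  using sum_mult_unit_vec[of k m f] by (simp add: unit_vec_def eq_commute)

text \<open>The diagonal form \<open>\<langle>d\<^sub>0,\<dots>,d\<^sub>m\<^sub>-\<^sub>1\<rangle>\<close>; vectors are functions on \<^typ>\<open>nat\<close> of which only
  the first \<open>length d\<close> entries matter.\<close>

definition diag_form :: "'a::field list \<Rightarrow> (nat \<Rightarrow> 'a) \<Rightarrow> (nat \<Rightarrow> 'a) \<Rightarrow> 'a" where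
  "diag_form d v w = (\<Sum>i<length d. v i * d!i * w i)"

lemma bval_diag_gram: "bval (length d) (diag_gram d) v w = diag_form d v w"
  unfolding bval_def diag_form_def diag_gram_def
  by (simp add: if_distrib[of "\<lambda>x. _ * x * _"] cong: if_cong)

lemma diag_form_cong:
  "(\<And>i. i < length d \<Longrightarrow> v i = v' i) \<Longrightarrow> (\<And>i. i < length d \<Longrightarrow> w i = w' i)
   \<Longrightarrow> diag_form d v w = diag_form d v' w'"
  unfolding diag_form_def by (rule sum.cong) auto

lemma diag_form_append:
  "diag_form (d1 @ d2) v w
   = diag_form d1 v w + diag_form d2 (vec_shift (length d1) v) (vec_shift (length d1) w)"
  unfolding diag_form_def by (simp add: sum_lessThan_add nth_append add.commute)

lemma diag_form_map_mult: "diag_form (map (\<lambda>x. c * x) d) v w = c * diag_form d v w"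
  unfolding diag_form_def by (simp add: sum_distrib_left algebra_simps)

lemma diag_form_add_left: "diag_form d (\<lambda>i. u i + u' i) w = diag_form d u w + diag_form d u' w"
  unfolding diag_form_def by (simp add: sum.distrib algebra_simps)

lemma diag_form_add_right: "diag_form d w (\<lambda>i. u i + u' i) = diag_form d w u + diag_form d w u'"
  unfolding diag_form_def by (simp add: sum.distrib algebra_simps)

lemma diag_form_scale_left: "diag_form d (\<lambda>i. a * u i) w = a * diag_form d u w"
  unfolding diag_form_def by (simp add: sum_distrib_left algebra_simps)

lemma diag_form_scale_right: "diag_form d w (\<lambda>i. a * u i) = a * diag_form d w u"
  unfolding diag_form_def by (simp add: sum_distrib_left algebra_simps)

lemma diag_form_diag: "diag_form d v v = (\<Sum>i<length d. (v i)^2 * d ! i)"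
  unfolding diag_form_def by (simp add: power2_eq_square mult_ac)

lemma diag_form_unit_vec: "i < length d \<Longrightarrow> diag_form d (unit_vec i) (unit_vec i) = d ! i"
  unfolding diag_form_def by (simp only: mult.assoc) (subst sum_unit_vec_left, simp_all add: unit_vec_def)

lemma diag_form_eq_zero: "\<not> nonzero_vec (length d) v \<Longrightarrow> diag_form d v v = 0"
  unfolding nonzero_vec_def diag_form_def by simp

lemma diag_form_in_subfield:
  "is_subfield S \<Longrightarrow> set d \<subseteq> S \<Longrightarrow> vec_on S (length d) v \<Longrightarrow> vec_on S (length d) w
   \<Longrightarrow> diag_form d v w \<in> S"
  unfolding diag_form_def vec_on_def by (auto intro!: subfield_sum subfield_mult)

lemma nonzero_vec_add_cases:
  assumes "nonzero_vec (m + m') v"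
  shows "nonzero_vec m v \<or> nonzero_vec m' (vec_shift m v)"
proof -
  obtain i where "i < m + m'" "v i \<noteq> 0" using assms unfolding nonzero_vec_def by blast
  then show ?thesis unfolding nonzero_vec_def
    by (cases "i < m") (auto intro: exI[of _ "i - m"])
qed

definition diag_values :: "'a::field set \<Rightarrow> 'a list \<Rightarrow> 'a set" where
  "diag_values S d = {diag_form d v v | v. vec_on S (length d) v}"

lemma diag_values_subset: "is_subfield S \<Longrightarrow> set d \<subseteq> S \<Longrightarrow> diag_values S d \<subseteq> S"
  unfolding diag_values_def using diag_form_in_subfield by blast

definition diag_anisotropic :: "'a::field set \<Rightarrow> 'a list \<Rightarrow> bool" where
  "diag_anisotropic S d \<longleftrightarrow>
     (\<forall>v. vec_on S (length d) v \<and> nonzero_vec (length d) v \<longrightarrow> diag_form d v v \<noteq> 0)"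

lemma diag_valuesI: "vec_on S (length d) v \<Longrightarrow> diag_form d v v = x \<Longrightarrow> x \<in> diag_values S d"
  unfolding diag_values_def by auto

lemma zero_in_diag_values: "is_subfield S \<Longrightarrow> 0 \<in> diag_values S d"
  by (rule diag_valuesI[of _ _ "\<lambda>_. 0"]) (auto simp: diag_form_def vec_on_def subfield_zero)

lemma Q_on_diag_gram: "is_subfield S \<Longrightarrow> Q_on S (length d) (diag_gram d) = diag_values S d"
  using zero_in_diag_values[of S d] diag_form_eq_zero[of d]
  unfolding Q_on_def diag_values_def by (auto simp: bval_diag_gram)

lemma diag_values_add:
  assumes "CHAR('a::field) = 2" and S: "is_subfield S"
    and "u \<in> diag_values S d" "w \<in> diag_values S (d :: 'a list)"
  shows "u + w \<in> diag_values S d"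
proof -
  obtain v v' where v: "vec_on S (length d) v" "u = diag_form d v v"
    and v': "vec_on S (length d) v'" "w = diag_form d v' v'"
    using assms(3,4) unfolding diag_values_def by auto
  have "diag_form d (\<lambda>i. v i + v' i) (\<lambda>i. v i + v' i) = u + w"
    unfolding v v' diag_form_diag
    by (simp add: char2_power2_add[OF assms(1)] sum.distrib algebra_simps)
  moreover have "vec_on S (length d) (\<lambda>i. v i + v' i)"
    using v v' S by (auto simp: vec_on_def subfield_add)
  ultimately show ?thesis by (intro diag_valuesI)
qed


section \<open>Isometries of diagonal forms\<close>

definition is_linmap :: "nat \<Rightarrow> ((nat \<Rightarrow> 'a::field) \<Rightarrow> nat \<Rightarrow> 'a) \<Rightarrow> bool" where
  "is_linmap m f \<longleftrightarrow> (\<forall>v i. i < m \<longrightarrow> f v i = (\<Sum>k<m. v k * f (unit_vec k) i))"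

lemma is_linmap_cong:
  "is_linmap m f \<Longrightarrow> (\<And>k. k < m \<Longrightarrow> v k = v' k) \<Longrightarrow> i < m \<Longrightarrow> f v i = f v' i"
  unfolding is_linmap_def by (metis (no_types, lifting) lessThan_iff sum.cong)

lemma is_linmap_zero: "is_linmap m f \<Longrightarrow> i < m \<Longrightarrow> f (\<lambda>_. 0) i = 0"
  unfolding is_linmap_def by simp

lemma is_linmap_id: "is_linmap m (\<lambda>v. v)"
  unfolding is_linmap_def by (auto simp: sum_unit_vec_right)

lemma is_linmap_comp:
  assumes f: "is_linmap m f" and g: "is_linmap m g"
  shows "is_linmap m (\<lambda>v. f (g v))"
  unfolding is_linmap_def
proof (intro allI impI)
  fix v i assume i: "i < m"
  have "f (g v) i = (\<Sum>a<m. g v a * f (unit_vec a) i)" using f i unfolding is_linmap_def by blast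
  also have "\<dots> = (\<Sum>a<m. \<Sum>k<m. v k * g (unit_vec k) a * f (unit_vec a) i)"
    using g unfolding is_linmap_def by (auto simp: sum_distrib_right intro!: sum.cong)
  also have "\<dots> = (\<Sum>k<m. v k * (\<Sum>a<m. g (unit_vec k) a * f (unit_vec a) i))"
    by (subst sum.swap) (simp add: sum_distrib_left mult.assoc)
  also have "\<dots> = (\<Sum>k<m. v k * f (g (unit_vec k)) i)"
    using f i unfolding is_linmap_def by (auto intro!: sum.cong)
  finally show "f (g v) i = (\<Sum>k<m. v k * f (g (unit_vec k)) i)" .
qed

text \<open>Only a right inverse g of f is required: in finite dimension this makes f bijective.\<close>

definition diag_iso :: "'a::field set \<Rightarrow> 'a list \<Rightarrow> 'a list \<Rightarrow> bool" where
  "diag_iso S d d' \<longleftrightarrow> length d = length d' \<and> (\<exists>f g.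
     is_linmap (length d) f \<and> is_linmap (length d) g \<and>
     (\<forall>v. vec_on S (length d) v \<longrightarrow> vec_on S (length d) (f v)) \<and>
     (\<forall>v. vec_on S (length d) v \<longrightarrow> vec_on S (length d) (g v)) \<and>
     (\<forall>v i. i < length d \<longrightarrow> f (g v) i = v i) \<and>
     (\<forall>v w. diag_form d (f v) (f w) = diag_form d' v w))"

lemma diag_isoI:
  assumes "length d = length d'" "is_linmap (length d) f" "is_linmap (length d) g"
    "\<And>v. vec_on S (length d) v \<Longrightarrow> vec_on S (length d) (f v)"
    "\<And>v. vec_on S (length d) v \<Longrightarrow> vec_on S (length d) (g v)"
    "\<And>v i. i < length d \<Longrightarrow> f (g v) i = v i"
    "\<And>v w. diag_form d (f v) (f w) = diag_form d' v w"
  shows "diag_iso S d d'"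
  unfolding diag_iso_def using assms by blast

lemma diag_isoE:
  assumes "diag_iso S d d'"
  obtains f g where "length d = length d'" "is_linmap (length d) f" "is_linmap (length d) g"
    "\<And>v. vec_on S (length d) v \<Longrightarrow> vec_on S (length d) (f v)"
    "\<And>v. vec_on S (length d) v \<Longrightarrow> vec_on S (length d) (g v)"
    "\<And>v i. i < length d \<Longrightarrow> f (g v) i = v i"
    "\<And>v w. diag_form d (f v) (f w) = diag_form d' v w"
  using assms unfolding diag_iso_def by blast

lemma bval_unit_vec: "i < m \<Longrightarrow> j < m \<Longrightarrow> bval m H (unit_vec i) (unit_vec j) = H i j"
  unfolding bval_def by (simp add: sum_unit_vec_left sum_mult_unit_vec)

lemma diag_iso_into_iso_on:
  assumes S: "is_subfield S" and "diag_iso S d d'"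
  shows "iso_on S (length d) (diag_gram d) (diag_gram d')"
proof -
  let ?m = "length d"
  obtain f g where l: "length d = length d'" and f: "is_linmap ?m f"
    and fS: "\<And>v. vec_on S ?m v \<Longrightarrow> vec_on S ?m (f v)"
    and gS: "\<And>v. vec_on S ?m v \<Longrightarrow> vec_on S ?m (g v)"
    and fg: "\<And>v i. i < ?m \<Longrightarrow> f (g v) i = v i"
    and b: "\<And>v w. diag_form d (f v) (f w) = diag_form d' v w"
    using diag_isoE[OF assms(2)] by metis
  define P where "P i j = f (unit_vec j) i" for i j
  define Q where "Q i j = g (unit_vec j) i" for i j
  have "\<forall>i<?m. \<forall>j<?m. P i j \<in> S \<and> Q i j \<in> S"
    using fS gS vec_on_unit_vec[OF S] unfolding P_def Q_def vec_on_def by blast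
  moreover have "(\<Sum>k<?m. P i k * Q k j) = (if i = j then 1 else 0)" if "i < ?m" "j < ?m" for i j
  proof -
    have "(\<Sum>k<?m. P i k * Q k j) = f (g (unit_vec j)) i"
      using f that unfolding is_linmap_def P_def Q_def by (simp add: mult.commute)
    then show ?thesis using fg that by (simp add: unit_vec_def)
  qed
  moreover have "(\<Sum>k<?m. \<Sum>l<?m. P k i * diag_gram d k l * P l j) = diag_gram d' i j"
    if "i < ?m" "j < ?m" for i j
  proof -
    have "(\<Sum>k<?m. \<Sum>l<?m. P k i * diag_gram d k l * P l j)
        = diag_form d (f (unit_vec i)) (f (unit_vec j))"
      unfolding P_def bval_diag_gram[symmetric] bval_def ..
    also have "\<dots> = diag_gram d' i j"
      using that l b bval_unit_vec[of i "length d'" j "diag_gram d'"] by (simp add: bval_diag_gram)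
    finally show ?thesis .
  qed
  ultimately show ?thesis unfolding iso_on_def by blast
qed

lemma sum4_swap: "(\<Sum>k\<in>A. \<Sum>l\<in>B. \<Sum>a\<in>C. \<Sum>b\<in>D. X k l a b)
   = (\<Sum>a\<in>C. \<Sum>b\<in>D. \<Sum>k\<in>A. \<Sum>l\<in>B. X k l a b)"
proof -
  have "(\<Sum>k\<in>A. \<Sum>l\<in>B. \<Sum>a\<in>C. \<Sum>b\<in>D. X k l a b)
      = (\<Sum>k\<in>A. \<Sum>a\<in>C. \<Sum>l\<in>B. \<Sum>b\<in>D. X k l a b)"
    by (rule sum.cong[OF refl], rule sum.swap)
  also have "\<dots> = (\<Sum>a\<in>C. \<Sum>k\<in>A. \<Sum>b\<in>D. \<Sum>l\<in>B. X k l a b)"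
    by (subst sum.swap) (rule sum.cong[OF refl], rule sum.cong[OF refl], rule sum.swap)
  also have "\<dots> = (\<Sum>a\<in>C. \<Sum>b\<in>D. \<Sum>k\<in>A. \<Sum>l\<in>B. X k l a b)"
    by (rule sum.cong[OF refl], rule sum.swap)
  finally show ?thesis .
qed

lemma iso_on_into_diag_iso:
  assumes S: "is_subfield S" and l: "length d = length d'"
    and "iso_on S (length d) (diag_gram d) (diag_gram d')"
  shows "diag_iso S d d'"
proof -
  let ?m = "length d"
  obtain P Q where PQ: "\<forall>i<?m. \<forall>j<?m. P i j \<in> S \<and> Q i j \<in> S"
    and inv: "\<forall>i<?m. \<forall>j<?m. (\<Sum>k<?m. P i k * Q k j) = (if i = j then 1 else 0)"
    and h: "\<forall>i<?m. \<forall>j<?m. (\<Sum>k<?m. \<Sum>l<?m. P k i * diag_gram d k l * P l j) = diag_gram d' i j"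
    using assms(3) unfolding iso_on_def by blast
  define f where "f v = (\<lambda>i. \<Sum>k<?m. P i k * v k)" for v
  define g where "g v = (\<lambda>i. \<Sum>k<?m. Q i k * v k)" for v
  show ?thesis
  proof (rule diag_isoI[OF l, of f g])
    show "is_linmap ?m f" "is_linmap ?m g" unfolding is_linmap_def f_def g_def
      by (auto simp: sum_mult_unit_vec sum_unit_vec_left mult.commute intro!: sum.cong)
    show "vec_on S ?m (f v)" "vec_on S ?m (g v)" if "vec_on S ?m v" for v
      using that PQ unfolding vec_on_def f_def g_def
      by (auto intro!: subfield_sum[OF S] subfield_mult[OF S])
    show "f (g v) i = v i" if "i < ?m" for v i
    proof -
      have "f (g v) i = (\<Sum>l<?m. (\<Sum>k<?m. P i k * Q k l) * v l)"
        unfolding f_def g_def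
        by (simp add: sum_distrib_left sum_distrib_right mult.assoc) (rule sum.swap)
      also have "\<dots> = (\<Sum>l<?m. unit_vec i l * v l)"
        using inv that by (intro sum.cong) (auto simp: unit_vec_def)
      finally show ?thesis using that by (simp add: sum_unit_vec_left)
    qed
    show "diag_form d (f v) (f w) = diag_form d' v w" for v w
    proof -
      have "diag_form d (f v) (f w)
          = (\<Sum>k<?m. \<Sum>l<?m. \<Sum>a<?m. \<Sum>b<?m. v a * (P k a * diag_gram d k l * P l b) * w b)"
        unfolding bval_diag_gram[symmetric] bval_def f_def
        by (simp add: sum_distrib_left sum_distrib_right mult_ac)
      also have "\<dots> = (\<Sum>a<?m. \<Sum>b<?m. v a * (\<Sum>k<?m. \<Sum>l<?m. P k a * diag_gram d k l * P l b) * w b)"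
        by (subst sum4_swap) (simp add: sum_distrib_left sum_distrib_right)
      also have "\<dots> = diag_form d' v w"
        unfolding bval_diag_gram[symmetric] bval_def l using h l by (auto intro!: sum.cong)
      finally show ?thesis .
    qed
  qed
qed

lemma diag_iso_refl: "diag_iso S d d"
  by (rule diag_isoI[of d d "\<lambda>v. v" "\<lambda>v. v"]) (auto simp: is_linmap_id)

lemma diag_iso_trans:
  assumes "diag_iso S d1 d2" "diag_iso S d2 d3"
  shows "diag_iso S d1 d3"
proof -
  obtain f1 g1 where l1: "length d1 = length d2" and f1: "is_linmap (length d1) f1"
    and g1: "is_linmap (length d1) g1"
    and f1S: "\<And>v. vec_on S (length d1) v \<Longrightarrow> vec_on S (length d1) (f1 v)"
    and g1S: "\<And>v. vec_on S (length d1) v \<Longrightarrow> vec_on S (length d1) (g1 v)"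
    and fg1: "\<And>v i. i < length d1 \<Longrightarrow> f1 (g1 v) i = v i"
    and b1: "\<And>v w. diag_form d1 (f1 v) (f1 w) = diag_form d2 v w"
    using diag_isoE[OF assms(1)] by metis
  obtain f2 g2 where l2: "length d2 = length d3" and f2: "is_linmap (length d2) f2"
    and g2: "is_linmap (length d2) g2"
    and f2S: "\<And>v. vec_on S (length d2) v \<Longrightarrow> vec_on S (length d2) (f2 v)"
    and g2S: "\<And>v. vec_on S (length d2) v \<Longrightarrow> vec_on S (length d2) (g2 v)"
    and fg2: "\<And>v i. i < length d2 \<Longrightarrow> f2 (g2 v) i = v i"
    and b2: "\<And>v w. diag_form d2 (f2 v) (f2 w) = diag_form d3 v w"
    using diag_isoE[OF assms(2)] by metis
  have "f1 (f2 (g2 (g1 v))) i = v i" if "i < length d1" for v i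
    using is_linmap_cong[OF f1 _ that, of "f2 (g2 (g1 v))" "g1 v"] fg2 fg1 that l1 by simp
  then show ?thesis
    using l1 l2 f1S f2S g1S g2S b1 b2
      is_linmap_comp[OF f1 f2[folded l1]] is_linmap_comp[OF g2[folded l1] g1]
    by (intro diag_isoI[of _ _ "\<lambda>v. f1 (f2 v)" "\<lambda>v. g2 (g1 v)"]) auto
qed

lemma diag_iso_scale:
  assumes "diag_iso S d d'"
  shows "diag_iso S (map (\<lambda>x. c * x) d) (map (\<lambda>x. c * x) d')"
proof -
  obtain f g where "length d = length d'" "is_linmap (length d) f" "is_linmap (length d) g"
    "\<And>v. vec_on S (length d) v \<Longrightarrow> vec_on S (length d) (f v)"
    "\<And>v. vec_on S (length d) v \<Longrightarrow> vec_on S (length d) (g v)"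
    "\<And>v i. i < length d \<Longrightarrow> f (g v) i = v i"
    "\<And>v w. diag_form d (f v) (f w) = diag_form d' v w"
    using diag_isoE[OF assms] by blast
  then show ?thesis by (intro diag_isoI[where f = f and g = g]) (auto simp: diag_form_map_mult)
qed

lemma diag_values_diag_iso:
  assumes "diag_iso S d d'"
  shows "diag_values S d = diag_values S d'"
proof -
  obtain f g where l: "length d = length d'"
    and fS: "\<And>v. vec_on S (length d) v \<Longrightarrow> vec_on S (length d) (f v)"
    and gS: "\<And>v. vec_on S (length d) v \<Longrightarrow> vec_on S (length d) (g v)"
    and fg: "\<And>v i. i < length d \<Longrightarrow> f (g v) i = v i"
    and b: "\<And>v w. diag_form d (f v) (f w) = diag_form d' v w"
    using diag_isoE[OF assms] by metis
  have "diag_form d u u = diag_form d' (g u) (g u)" for u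
    using diag_form_cong[of d "f (g u)" u "f (g u)" u] fg b by simp
  then have "diag_values S d \<subseteq> diag_values S d'"
    unfolding diag_values_def using l gS by fastforce
  moreover have "diag_values S d' \<subseteq> diag_values S d"
    unfolding diag_values_def using l fS b by (fastforce simp flip: b)
  ultimately show ?thesis by blast
qed


definition block_map :: "nat \<Rightarrow> ((nat \<Rightarrow> 'a) \<Rightarrow> nat \<Rightarrow> 'a) \<Rightarrow> ((nat \<Rightarrow> 'a) \<Rightarrow> nat \<Rightarrow> 'a)
    \<Rightarrow> (nat \<Rightarrow> 'a) \<Rightarrow> nat \<Rightarrow> 'a" where
  "block_map m1 f1 f2 v = (\<lambda>i. if i < m1 then f1 v i else f2 (vec_shift m1 v) (i - m1))"

lemma vec_shift_block_map: "vec_shift m1 (block_map m1 f1 f2 v) = f2 (vec_shift m1 v)"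
  unfolding block_map_def by (auto simp: fun_eq_iff)

lemma is_linmap_block_map:
  assumes f1: "is_linmap m1 f1" and f2: "is_linmap m2 f2"
  shows "is_linmap (m1 + m2) (block_map m1 f1 f2)"
  unfolding is_linmap_def
proof (intro allI impI)
  fix v i assume i: "i < m1 + m2"
  show "block_map m1 f1 f2 v i = (\<Sum>k<m1 + m2. v k * block_map m1 f1 f2 (unit_vec k) i)"
  proof (cases "i < m1")
    case True
    have "f1 (unit_vec (k + m1)) i = f1 (\<lambda>_. 0) i" for k
      by (rule is_linmap_cong[OF f1 _ True]) (simp add: unit_vec_def)
    moreover have "f1 v i = (\<Sum>k<m1. v k * f1 (unit_vec k) i)"
      using f1 True unfolding is_linmap_def by blast
    ultimately show ?thesis
      using True is_linmap_zero[OF f1 True] by (simp add: block_map_def sum_lessThan_add)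
  next
    case False
    then have i': "i - m1 < m2" using i by simp
    have "vec_shift m1 (unit_vec k) = (\<lambda>_. 0::'a)" if "k < m1" for k
      using that by (auto simp: unit_vec_def fun_eq_iff)
    moreover have "vec_shift m1 (unit_vec (k + m1)) = (unit_vec k :: nat \<Rightarrow> 'a)" for k
      by (auto simp: unit_vec_def fun_eq_iff)
    moreover have "f2 (vec_shift m1 v) (i - m1) = (\<Sum>k<m2. v (k + m1) * f2 (unit_vec k) (i - m1))"
      using f2 i' unfolding is_linmap_def vec_shift_def by blast
    ultimately show ?thesis
      using False is_linmap_zero[OF f2 i'] by (simp add: block_map_def sum_lessThan_add)
  qed
qed

lemma vec_on_block_map:
  assumes "vec_on S (m1 + m2) v"
    and "\<And>v. vec_on S m1 v \<Longrightarrow> vec_on S m1 (f1 v)"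
    and "\<And>v. vec_on S m2 v \<Longrightarrow> vec_on S m2 (f2 v)"
  shows "vec_on S (m1 + m2) (block_map m1 f1 f2 v)"
proof -
  have "vec_on S m1 v" "vec_on S m2 (vec_shift m1 v)"
    using assms(1) by (auto simp: vec_on_def)
  then have "vec_on S m1 (f1 v)" "vec_on S m2 (f2 (vec_shift m1 v))"
    using assms(2,3) by blast+
  then show ?thesis unfolding vec_on_def block_map_def
    using assms(1) by (auto simp: vec_on_def)
qed

lemma block_map_inverse:
  assumes "is_linmap m1 f1" and "\<And>v i. i < m1 \<Longrightarrow> f1 (g1 v) i = v i"
    and "\<And>v i. i < m2 \<Longrightarrow> f2 (g2 v) i = v i" and i: "i < m1 + m2"
  shows "block_map m1 f1 f2 (block_map m1 g1 g2 v) i = v i"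
proof (cases "i < m1")
  case True
  have "f1 (block_map m1 g1 g2 v) i = f1 (g1 v) i"
    by (rule is_linmap_cong[OF assms(1) _ True]) (simp add: block_map_def)
  then show ?thesis using True assms(2) by (simp add: block_map_def)
next
  case False
  then have "block_map m1 f1 f2 (block_map m1 g1 g2 v) i
      = f2 (vec_shift m1 (block_map m1 g1 g2 v)) (i - m1)"
    by (simp add: block_map_def)
  also have "\<dots> = v i"
    using assms(3)[of "i - m1"] False i by (simp add: vec_shift_block_map)
  finally show ?thesis .
qed

lemma diag_form_block_map:
  assumes "length d1 = m1" and "\<And>v w. diag_form d1 (f1 v) (f1 w) = diag_form d1' v w"
    and "\<And>v w. diag_form d2 (f2 v) (f2 w) = diag_form d2' v w" and "length d1' = m1"
  shows "diag_form (d1 @ d2) (block_map m1 f1 f2 v) (block_map m1 f1 f2 w)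
    = diag_form (d1' @ d2') v w"
proof -
  have "diag_form d1 (block_map m1 f1 f2 v) (block_map m1 f1 f2 w) = diag_form d1 (f1 v) (f1 w)"
    using assms(1) by (intro diag_form_cong) (auto simp: block_map_def)
  then show ?thesis
    unfolding diag_form_append assms(1,4) vec_shift_block_map assms(2,3) by simp
qed

lemma diag_iso_append:
  assumes "diag_iso S d1 d1'" and "diag_iso S d2 d2'"
  shows "diag_iso S (d1 @ d2) (d1' @ d2')"
proof -
  obtain f1 g1 where l1: "length d1 = length d1'" and f1: "is_linmap (length d1) f1"
    and g1: "is_linmap (length d1) g1"
    and f1S: "\<And>v. vec_on S (length d1) v \<Longrightarrow> vec_on S (length d1) (f1 v)"
    and g1S: "\<And>v. vec_on S (length d1) v \<Longrightarrow> vec_on S (length d1) (g1 v)"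
    and fg1: "\<And>v i. i < length d1 \<Longrightarrow> f1 (g1 v) i = v i"
    and b1: "\<And>v w. diag_form d1 (f1 v) (f1 w) = diag_form d1' v w"
    using diag_isoE[OF assms(1)] by metis
  obtain f2 g2 where l2: "length d2 = length d2'" and f2: "is_linmap (length d2) f2"
    and g2: "is_linmap (length d2) g2"
    and f2S: "\<And>v. vec_on S (length d2) v \<Longrightarrow> vec_on S (length d2) (f2 v)"
    and g2S: "\<And>v. vec_on S (length d2) v \<Longrightarrow> vec_on S (length d2) (g2 v)"
    and fg2: "\<And>v i. i < length d2 \<Longrightarrow> f2 (g2 v) i = v i"
    and b2: "\<And>v w. diag_form d2 (f2 v) (f2 w) = diag_form d2' v w"
    using diag_isoE[OF assms(2)] by metis
  let ?m = "length d1"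
  show ?thesis
  proof (rule diag_isoI[of _ _ "block_map ?m f1 f2" "block_map ?m g1 g2"])
    show "length (d1 @ d2) = length (d1' @ d2')" using l1 l2 by simp
    show "is_linmap (length (d1 @ d2)) (block_map ?m f1 f2)"
      "is_linmap (length (d1 @ d2)) (block_map ?m g1 g2)"
      using is_linmap_block_map[OF f1 f2] is_linmap_block_map[OF g1 g2] by simp_all
    show "vec_on S (length (d1 @ d2)) (block_map ?m f1 f2 v)"
      "vec_on S (length (d1 @ d2)) (block_map ?m g1 g2 v)"
      if "vec_on S (length (d1 @ d2)) v" for v
      using vec_on_block_map[of S ?m "length d2" v, OF _ f1S f2S]
        vec_on_block_map[of S ?m "length d2" v, OF _ g1S g2S] that by simp_all
    show "block_map ?m f1 f2 (block_map ?m g1 g2 v) i = v i" if "i < length (d1 @ d2)" for v i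
      using block_map_inverse[of ?m f1 g1 "length d2" f2 g2, OF f1 fg1 fg2] that by simp
    show "diag_form (d1 @ d2) (block_map ?m f1 f2 v) (block_map ?m f1 f2 w)
        = diag_form (d1' @ d2') v w" for v w
      using diag_form_block_map[OF refl b1 b2] l1 by simp
  qed
qed

lemma diag_iso_permute:
  assumes "mset d = mset d'"
  shows "diag_iso S d d'"
proof -
  obtain p where p: "p permutes {..<length d'}" and pl: "permute_list p d' = d"
    using mset_eq_permutation[OF assms] by blast
  have l: "length d = length d'" using pl by auto
  have dp: "d ! i = d' ! p i" if "i < length d" for i
    using permute_list_nth[OF p] that l pl by auto
  have pin: "p i < length d" if "i < length d" for i using permutes_in_image[OF p] that l by auto
  have ipin: "inv p i < length d" if "i < length d" for i
    using permutes_in_image[OF permutes_inv[OF p]] that l by auto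
  show ?thesis
  proof (rule diag_isoI[where f = "\<lambda>v i. v (p i)" and g = "\<lambda>v i. v (inv p i)"])
    show "length d = length d'" by fact
    show "is_linmap (length d) (\<lambda>v i. v (p i))" "is_linmap (length d) (\<lambda>v i. v (inv p i))"
      unfolding is_linmap_def using pin ipin by (auto simp: sum_unit_vec_right)
    show "vec_on S (length d) (\<lambda>i. v (p i))" "vec_on S (length d) (\<lambda>i. v (inv p i))"
      if "vec_on S (length d) v" for v
      using that pin ipin by (auto simp: vec_on_def)
    show "v (inv p (p i)) = v i" for v i using permutes_inverses(2)[OF p] by simp
    show "diag_form d (\<lambda>i. v (p i)) (\<lambda>i. w (p i)) = diag_form d' v w" for v w
    proof -
      have "diag_form d (\<lambda>i. v (p i)) (\<lambda>i. w (p i))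
          = (\<Sum>i<length d'. v (p i) * d' ! p i * w (p i))"
        unfolding diag_form_def using dp l by (auto intro!: sum.cong)
      also have "\<dots> = (\<Sum>i<length d'. v i * d' ! i * w i)"
        using sum.permute[OF p, of "\<lambda>i. v i * d' ! i * w i"] by (simp add: comp_def)
      finally show ?thesis by (simp add: diag_form_def)
    qed
  qed
qed


section \<open>Multiplicativity of Pfister forms\<close>

lemma length_pfister_list [simp]: "length (pfister_list as) = 2 ^ length as"
  by (induction as) auto

lemma pfister_list_nth_0: "pfister_list as ! 0 = 1"
  by (induction as) (auto simp: nth_append)

lemma pfister_list_subset: "is_subfield S \<Longrightarrow> set as \<subseteq> S \<Longrightarrow> set (pfister_list as) \<subseteq> S"
  by (induction as) (auto simp: subfield_one subfield_mult)

lemma diag_form_pfister_Cons: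
  "diag_form (pfister_list (c # cs)) v w = diag_form (pfister_list cs) v w
     + c * diag_form (pfister_list cs) (vec_shift (2^length cs) v) (vec_shift (2^length cs) w)"
  by (simp add: diag_form_append diag_form_map_mult)

text \<open>\<^term>\<open>pfister_mult cs y v\<close> is the product y v in the commutative algebra
  F[t_1,...,t_n]/(t_1^2 - c_1, ..., t_n^2 - c_n), in the basis of squarefree monomials
  (t_1 is the most significant bit of the index). In characteristic two \<open>y y\<close> is the
  scalar b(y,y), so multiplication by y is a similitude of factor b(y,y).\<close>
fun pfister_mult :: "'a::field list \<Rightarrow> (nat \<Rightarrow> 'a) \<Rightarrow> (nat \<Rightarrow> 'a) \<Rightarrow> nat \<Rightarrow> 'a" where
  "pfister_mult [] y v = (\<lambda>i. if i = 0 then y 0 * v 0 else 0)"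
| "pfister_mult (c # cs) y v = (\<lambda>i.
     if i < 2 ^ length cs then
       pfister_mult cs y v i
       + c * pfister_mult cs (vec_shift (2 ^ length cs) y) (vec_shift (2 ^ length cs) v) i
     else if i < 2 * 2 ^ length cs then
       pfister_mult cs (vec_shift (2 ^ length cs) y) v (i - 2 ^ length cs)
       + pfister_mult cs y (vec_shift (2 ^ length cs) v) (i - 2 ^ length cs)
     else 0)"

lemma pfister_mult_beyond: "i \<ge> 2 ^ length cs \<Longrightarrow> pfister_mult cs y v i = 0"
  by (induction cs arbitrary: y v i) auto

lemma pfister_mult_cong:
  "(\<And>i. i < 2 ^ length cs \<Longrightarrow> y i = y' i) \<Longrightarrow> (\<And>i. i < 2 ^ length cs \<Longrightarrow> v i = v' i)
   \<Longrightarrow> pfister_mult cs y v = pfister_mult cs y' v'"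
proof (induction cs arbitrary: y v y' v')
  case Nil then show ?case by auto
next
  case (Cons c cs)
  let ?m = "2 ^ length cs"
  have "pfister_mult cs y v = pfister_mult cs y' v'"
    "pfister_mult cs (vec_shift ?m y) (vec_shift ?m v) = pfister_mult cs (vec_shift ?m y') (vec_shift ?m v')"
    "pfister_mult cs (vec_shift ?m y) v = pfister_mult cs (vec_shift ?m y') v'"
    "pfister_mult cs y (vec_shift ?m v) = pfister_mult cs y' (vec_shift ?m v')"
    by (rule Cons.IH; use Cons.prems in auto)+
  then show ?case by (simp only: pfister_mult.simps)
qed

lemma pfister_mult_add:
  "pfister_mult cs y (\<lambda>i. v i + w i) = (\<lambda>i. pfister_mult cs y v i + pfister_mult cs y w i)"
proof (induction cs arbitrary: y v w)
  case (Cons c cs) then show ?case by (auto simp: fun_eq_iff algebra_simps vec_shift_def)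
qed (auto simp: fun_eq_iff algebra_simps)

lemma pfister_mult_scale: "pfister_mult cs y (\<lambda>i. a * v i) = (\<lambda>i. a * pfister_mult cs y v i)"
proof (induction cs arbitrary: y v)
  case (Cons c cs) then show ?case by (auto simp: fun_eq_iff algebra_simps vec_shift_def)
qed (auto simp: fun_eq_iff algebra_simps)

lemma pfister_mult_restrict:
  "pfister_mult cs y (pfister_mult (c # cs) z w) = pfister_mult cs y (\<lambda>i. pfister_mult cs z w i
     + c * pfister_mult cs (vec_shift (2 ^ length cs) z) (vec_shift (2 ^ length cs) w) i)"
  by (rule pfister_mult_cong) auto

lemma vec_shift_pfister_mult:
  "vec_shift (2 ^ length cs) (pfister_mult (c # cs) z w) = (\<lambda>i.
     pfister_mult cs (vec_shift (2 ^ length cs) z) w i + pfister_mult cs z (vec_shift (2 ^ length cs) w) i)"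
  by (rule ext) (auto simp: pfister_mult_beyond)

lemma diag_form_pfister_mult_restrict_left:
  "diag_form (pfister_list cs) (pfister_mult (c # cs) z w) u = diag_form (pfister_list cs) (\<lambda>i.
     pfister_mult cs z w i + c * pfister_mult cs (vec_shift (2 ^ length cs) z) (vec_shift (2 ^ length cs) w) i) u"
  by (rule diag_form_cong) auto

lemma diag_form_pfister_mult_restrict_right:
  "diag_form (pfister_list cs) u (pfister_mult (c # cs) z w) = diag_form (pfister_list cs) u (\<lambda>i.
     pfister_mult cs z w i + c * pfister_mult cs (vec_shift (2 ^ length cs) z) (vec_shift (2 ^ length cs) w) i)"
  by (rule diag_form_cong) auto

lemma pfister_mult_left_commute:
  "pfister_mult cs y (pfister_mult cs z w) = pfister_mult cs z (pfister_mult cs y w)"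
proof (induction cs arbitrary: y z w)
  case (Cons c cs)
  let ?h = "vec_shift (2 ^ length cs)"
  note IH = Cons.IH
  show ?case
  proof (rule ext)
    fix i
    show "pfister_mult (c # cs) y (pfister_mult (c # cs) z w) i
        = pfister_mult (c # cs) z (pfister_mult (c # cs) y w) i"
      by (simp only: pfister_mult.simps(2)[of c cs y "pfister_mult (c # cs) z w"]
          pfister_mult.simps(2)[of c cs z "pfister_mult (c # cs) y w"]
          pfister_mult_restrict vec_shift_pfister_mult pfister_mult_add pfister_mult_scale)
        (simp del: vec_shift_apply add: IH[of y z w] IH[of y "?h z" "?h w"] IH[of "?h y" "?h z" w]
          IH[of "?h y" z "?h w"] IH[of y z "?h w"] IH[of y "?h z" w] IH[of "?h y" z w]
          IH[of "?h y" "?h z" "?h w"] algebra_simps)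
  qed
qed (auto simp: fun_eq_iff)

lemma diag_form_pfister_mult_adjoint:
  "diag_form (pfister_list cs) (pfister_mult cs y v) w = diag_form (pfister_list cs) v (pfister_mult cs y w)"
proof (induction cs arbitrary: y v w)
  case (Cons c cs)
  let ?h = "vec_shift (2 ^ length cs)"
  note IH = Cons.IH
  show ?case
    by (simp only: diag_form_pfister_Cons diag_form_pfister_mult_restrict_left
        diag_form_pfister_mult_restrict_right vec_shift_pfister_mult diag_form_add_left
        diag_form_add_right diag_form_scale_left diag_form_scale_right)
      (simp del: vec_shift_apply add: IH[of y v w] IH[of "?h y" "?h v" w] IH[of "?h y" v "?h w"]
        IH[of y "?h v" "?h w"] algebra_simps)
qed (simp add: diag_form_def)

text \<open>In both halves the mixed terms \<open>y\<^sub>0 (y\<^sub>1 w) + y\<^sub>1 (y\<^sub>0 w)\<close> cancel by commutativity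
  and \<open>x + x = 0\<close>.\<close>

lemma pfister_mult_square:
  assumes c2: "CHAR('a::field) = 2"
  shows "i < 2 ^ length cs
    \<Longrightarrow> pfister_mult cs y (pfister_mult cs y w) i = diag_form (pfister_list cs) y y * (w i :: 'a)"
proof (induction cs arbitrary: y w i)
  case (Cons c cs)
  let ?m = "2 ^ length cs" and ?p = "pfister_mult cs"
  let ?y1 = "vec_shift ?m y" and ?w1 = "vec_shift ?m w" and ?yw = "pfister_mult (c # cs) y w"
  note IH = Cons.IH
  have two: "(x::'a) + x = 0" for x using char2_add_self[OF c2] .
  show ?case
  proof (cases "i < ?m")
    case True
    have "pfister_mult (c # cs) y ?yw i = ?p y ?yw i + c * ?p ?y1 (vec_shift ?m ?yw) i"
      using True by (simp only: pfister_mult.simps(2)[of c cs y ?yw] if_True)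
    also have "\<dots> = ?p y (?p y w) i + c * ?p ?y1 (?p ?y1 w) i
        + c * (?p y (?p ?y1 ?w1) i + ?p ?y1 (?p y ?w1) i)"
      by (simp only: pfister_mult_restrict vec_shift_pfister_mult pfister_mult_add pfister_mult_scale)
        (simp del: vec_shift_apply add: algebra_simps)
    also have "?p y (?p ?y1 ?w1) i + ?p ?y1 (?p y ?w1) i = 0"
      by (simp only: pfister_mult_left_commute[of cs ?y1 y] two)
    also have "?p y (?p y w) i + c * ?p ?y1 (?p ?y1 w) i + c * 0 = diag_form (pfister_list (c # cs)) y y * w i"
      by (simp only: IH[OF True] diag_form_pfister_Cons) (simp del: vec_shift_apply add: algebra_simps)
    finally show ?thesis .
  next
    case False
    then have j: "i - ?m < ?m" and wi: "?w1 (i - ?m) = w i" using Cons.prems by simp_all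
    have "pfister_mult (c # cs) y ?yw i = ?p ?y1 ?yw (i - ?m) + ?p y (vec_shift ?m ?yw) (i - ?m)"
      using False Cons.prems
      by (simp only: pfister_mult.simps(2)[of c cs y ?yw] if_False if_True length_Cons power_Suc)
    also have "\<dots> = c * ?p ?y1 (?p ?y1 ?w1) (i - ?m) + ?p y (?p y ?w1) (i - ?m)
        + (?p ?y1 (?p y w) (i - ?m) + ?p y (?p ?y1 w) (i - ?m))"
      by (simp only: pfister_mult_restrict vec_shift_pfister_mult pfister_mult_add pfister_mult_scale)
        (simp del: vec_shift_apply add: algebra_simps)
    also have "?p ?y1 (?p y w) (i - ?m) + ?p y (?p ?y1 w) (i - ?m) = 0"
      by (simp only: pfister_mult_left_commute[of cs ?y1 y] two)
    also have "c * ?p ?y1 (?p ?y1 ?w1) (i - ?m) + ?p y (?p y ?w1) (i - ?m) + 0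
        = diag_form (pfister_list (c # cs)) y y * w i"
      by (simp only: IH[OF j] diag_form_pfister_Cons wi) (simp del: vec_shift_apply add: algebra_simps)
    finally show ?thesis .
  qed
qed (simp add: diag_form_def)

lemma pfister_mult_in_subfield:
  "is_subfield S \<Longrightarrow> set cs \<subseteq> S \<Longrightarrow> vec_on S (2 ^ length cs) y \<Longrightarrow> vec_on S (2 ^ length cs) v
   \<Longrightarrow> pfister_mult cs y v i \<in> S"
proof (induction cs arbitrary: y v i)
  case Nil then show ?case by (auto simp: vec_on_def subfield_mult subfield_zero)
next
  case (Cons c cs)
  let ?m = "2 ^ length cs"
  have y1: "vec_on S ?m y" "vec_on S ?m (vec_shift ?m y)"
    and v1: "vec_on S ?m v" "vec_on S ?m (vec_shift ?m v)"
    using Cons.prems by (auto simp: vec_on_def)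
  have c: "c \<in> S" "set cs \<subseteq> S" using Cons.prems by auto
  note I = Cons.IH[OF Cons.prems(1) c(2)]
  show ?case
    using I[OF y1(1) v1(1)] I[OF y1(2) v1(2)] I[OF y1(2) v1(1)] I[OF y1(1) v1(2)] c Cons.prems(1)
    by (simp del: vec_shift_apply add: subfield_add subfield_mult subfield_zero)
qed

lemma pfister_mult_zero: "pfister_mult cs y (\<lambda>i. 0) = (\<lambda>i. 0)"
  using pfister_mult_scale[of cs y 0 "\<lambda>i. 0"] by simp

lemma pfister_mult_sum:
  "pfister_mult cs y (\<lambda>i. \<Sum>k\<in>A. f k i) = (\<lambda>i. \<Sum>k\<in>A. pfister_mult cs y (f k) i)"
proof (induction A rule: infinite_finite_induct)
  case (infinite A) then show ?case by (simp add: pfister_mult_zero)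
next
  case empty then show ?case by (simp add: pfister_mult_zero)
next
  case (insert x F) then show ?case by (simp add: pfister_mult_add)
qed

lemma is_linmap_pfister_mult: "is_linmap (2 ^ length cs) (pfister_mult cs y)"
  unfolding is_linmap_def
proof (intro allI impI)
  fix v and i :: nat
  let ?m = "2 ^ length cs"
  assume i: "i < ?m"
  have "pfister_mult cs y v = pfister_mult cs y (\<lambda>j. \<Sum>k<?m. v k * unit_vec k j)"
    by (rule pfister_mult_cong) (auto simp: sum_unit_vec_right)
  also have "\<dots> = (\<lambda>j. \<Sum>k<?m. v k * pfister_mult cs y (unit_vec k) j)"
    by (simp add: pfister_mult_sum pfister_mult_scale)
  finally show "pfister_mult cs y v i = (\<Sum>k<?m. v k * pfister_mult cs y (unit_vec k) i)" by simp
qed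

text \<open>Writing \<open>x = b(y,y)\<close>, the isometry is \<open>v \<mapsto> x\<inverse> (y v)\<close>, with inverse \<open>v \<mapsto> y v\<close>.\<close>

lemma pfister_round:
  assumes c2: "CHAR('a::field) = 2" and S: "is_subfield S" and cs: "set cs \<subseteq> S"
    and x: "x \<in> diag_values S (pfister_list cs)" and x0: "(x::'a) \<noteq> 0"
  shows "diag_iso S (map (\<lambda>z. x * z) (pfister_list cs)) (pfister_list cs)"
proof -
  let ?m = "2 ^ length cs"
  let ?d = "pfister_list cs"
  obtain y where y: "vec_on S ?m y" and xy: "x = diag_form ?d y y"
    using x unfolding diag_values_def by auto
  have xS: "x \<in> S" using x diag_values_subset[OF S pfister_list_subset[OF S cs]] by blast
  let ?f = "\<lambda>v i. inverse x * pfister_mult cs y v i"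
  show ?thesis
  proof (rule diag_isoI[where f = ?f and g = "pfister_mult cs y"])
    show "length (map ((*) x) ?d) = length ?d" by simp
    show "is_linmap (length (map ((*) x) ?d)) ?f"
      using is_linmap_pfister_mult[of cs y] unfolding is_linmap_def
      by (simp add: sum_distrib_left mult_ac)
    show "is_linmap (length (map ((*) x) ?d)) (pfister_mult cs y)" using is_linmap_pfister_mult by simp
    show "vec_on S (length (map ((*) x) ?d)) (?f v)" "vec_on S (length (map ((*) x) ?d)) (pfister_mult cs y v)"
      if "vec_on S (length (map ((*) x) ?d)) v" for v
      using that pfister_mult_in_subfield[OF S cs y] subfield_inverse[OF S xS] subfield_mult[OF S]
      unfolding vec_on_def by simp_all
    show "?f (pfister_mult cs y v) i = v i" if "i < length (map ((*) x) ?d)" for v i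
      using that pfister_mult_square[OF c2, of i cs y v] xy x0 by simp
    show "diag_form (map ((*) x) ?d) (?f v) (?f w) = diag_form ?d v w" for v w
    proof -
      have "diag_form ?d v (pfister_mult cs y (pfister_mult cs y w)) = diag_form ?d v (\<lambda>i. x * w i)"
        by (rule diag_form_cong) (auto simp: pfister_mult_square[OF c2] xy)
      then have "diag_form ?d (pfister_mult cs y v) (pfister_mult cs y w) = x * diag_form ?d v w"
        by (simp add: diag_form_pfister_mult_adjoint diag_form_scale_right)
      moreover have "diag_form (map ((*) x) ?d) (?f v) (?f w)
          = x * (inverse x * (inverse x * diag_form ?d (pfister_mult cs y v) (pfister_mult cs y w)))"
        by (simp only: diag_form_map_mult diag_form_scale_left diag_form_scale_right mult_ac)
      ultimately show ?thesis using x0 by (simp add: field_simps)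
    qed
  qed
qed


section \<open>Value sets and anisotropic parts of Pfister forms\<close>

lemma mset_pfister_list_swap:
  fixes a b :: "'a::comm_monoid_mult"
  shows "mset (pfister_list (a # b # ys)) = mset (pfister_list (b # a # ys))"
proof -
  have e: "(\<lambda>x::'a. a * (b * x)) = (\<lambda>x. b * (a * x))" by (rule ext, rule mult.left_commute)
  show ?thesis by (simp add: multiset.map_comp comp_def ac_simps e)
qed

lemma mset_pfister_list_Cons_cong:
  "mset (pfister_list xs) = mset (pfister_list ys)
   \<Longrightarrow> mset (pfister_list (a # xs)) = mset (pfister_list (a # ys))"
  by (simp add: image_mset_def[symmetric])

lemma mset_pfister_list_move:
  fixes a :: "'a::comm_monoid_mult"
  shows "mset (pfister_list (a # replicate r 1 @ bs)) = mset (pfister_list (replicate r 1 @ a # bs))"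
proof (induction r)
  case (Suc r)
  have "mset (pfister_list (a # replicate (Suc r) 1 @ bs))
      = mset (pfister_list (1 # a # replicate r 1 @ bs))"
    by (simp only: replicate_Suc append_Cons) (rule mset_pfister_list_swap)
  also have "\<dots> = mset (pfister_list (1 # replicate r 1 @ a # bs))"
    by (rule mset_pfister_list_Cons_cong[OF Suc])
  finally show ?case by simp
qed simp

lemma diag_iso_pfister_Cons:
  "diag_iso S (pfister_list xs) (pfister_list ys)
   \<Longrightarrow> diag_iso S (pfister_list (a # xs)) (pfister_list (a # ys))"
  by (simp add: diag_iso_append diag_iso_scale)

lemma diag_values_pfister_Cons:
  assumes S: "is_subfield S"
  shows "diag_values S (pfister_list (a # xs))
    = {u + a * w | u w. u \<in> diag_values S (pfister_list xs) \<and> w \<in> diag_values S (pfister_list xs)}"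
proof -
  let ?m = "2 ^ length xs" and ?d = "pfister_list xs"
  show ?thesis
  proof (intro set_eqI iffI)
    fix z assume "z \<in> diag_values S (pfister_list (a # xs))"
    then obtain v where v: "vec_on S (length (pfister_list (a # xs))) v"
      and z: "z = diag_form (pfister_list (a # xs)) v v"
      unfolding diag_values_def by blast
    have "vec_on S ?m v" "vec_on S ?m (vec_shift ?m v)" using v by (auto simp: vec_on_def)
    moreover have "z = diag_form ?d v v + a * diag_form ?d (vec_shift ?m v) (vec_shift ?m v)"
      using z by (simp only: diag_form_pfister_Cons)
    ultimately show "z \<in> {u + a * w | u w. u \<in> diag_values S ?d \<and> w \<in> diag_values S ?d}"
      by (blast intro: diag_valuesI[where d = ?d, simplified])
  next
    fix z assume "z \<in> {u + a * w | u w. u \<in> diag_values S ?d \<and> w \<in> diag_values S ?d}"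
    then obtain v0 v1 where v0: "vec_on S ?m v0" and v1: "vec_on S ?m v1"
      and z: "z = diag_form ?d v0 v0 + a * diag_form ?d v1 v1" unfolding diag_values_def by auto
    define v where "v i = (if i < ?m then v0 i else v1 (i - ?m))" for i
    have "vec_on S (2 * ?m) v" using v0 v1 unfolding vec_on_def v_def by auto
    moreover have "diag_form ?d v v = diag_form ?d v0 v0" by (rule diag_form_cong) (auto simp: v_def)
    moreover have "vec_shift ?m v = v1" by (auto simp: v_def fun_eq_iff)
    ultimately have "diag_form (pfister_list (a # xs)) v v = z"
      using z by (simp only: diag_form_pfister_Cons)
    moreover have "vec_on S (length (pfister_list (a # xs))) v"
      using \<open>vec_on S (2 * ?m) v\<close> by (simp add: mult_2)
    ultimately show "z \<in> diag_values S (pfister_list (a # xs))" by (intro diag_valuesI)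
  qed
qed

lemma diag_values_pfister_mult:
  assumes c2: "CHAR('a::field) = 2" and S: "is_subfield S" and cs: "set cs \<subseteq> S"
    and "u \<in> diag_values S (pfister_list cs)" "w \<in> diag_values S (pfister_list (cs :: 'a list))"
  shows "u * w \<in> diag_values S (pfister_list cs)"
proof -
  let ?d = "pfister_list cs"
  obtain y v where y: "vec_on S (2 ^ length cs) y" "u = diag_form ?d y y"
    and v: "vec_on S (2 ^ length cs) v" "w = diag_form ?d v v"
    using assms(4,5) unfolding diag_values_def by auto
  have "diag_form ?d v (pfister_mult cs y (pfister_mult cs y v)) = diag_form ?d v (\<lambda>i. u * v i)"
    by (rule diag_form_cong) (auto simp: pfister_mult_square[OF c2] y)
  then have "diag_form ?d (pfister_mult cs y v) (pfister_mult cs y v) = u * w"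
    by (simp add: diag_form_pfister_mult_adjoint diag_form_scale_right v)
  moreover have "vec_on S (2 ^ length cs) (pfister_mult cs y v)"
    using pfister_mult_in_subfield[OF S cs y(1) v(1)] by (simp add: vec_on_def)
  ultimately show ?thesis by (intro diag_valuesI) auto
qed

lemma power2_in_diag_values_pfister:
  assumes S: "is_subfield S" and t: "t \<in> S"
  shows "t^2 \<in> diag_values S (pfister_list cs)"
proof -
  have u: "diag_form (pfister_list cs) (unit_vec 0) (unit_vec 0) = 1"
    by (simp add: diag_form_unit_vec pfister_list_nth_0)
  have "diag_form (pfister_list cs) (\<lambda>i. t * unit_vec 0 i) (\<lambda>i. t * unit_vec 0 i) = t^2"
    by (simp only: diag_form_scale_left diag_form_scale_right u) (simp add: power2_eq_square)
  moreover have "vec_on S (2 ^ length cs) (\<lambda>i. t * unit_vec 0 i)"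
    using vec_on_unit_vec[OF S, of _ 0] t subfield_mult[OF S] by (auto simp: vec_on_def)
  ultimately show ?thesis by (intro diag_valuesI) auto
qed

lemma diag_values_pfister_inverse:
  assumes c2: "CHAR('a::field) = 2" and S: "is_subfield S" and cs: "set cs \<subseteq> S"
    and u: "u \<in> diag_values S (pfister_list (cs :: 'a list))"
  shows "inverse u \<in> diag_values S (pfister_list cs)"
proof (cases "u = 0")
  case True then show ?thesis using zero_in_diag_values[OF S] by simp
next
  case False
  have uS: "u \<in> S" using u diag_values_subset[OF S pfister_list_subset[OF S cs]] by blast
  have "inverse u = (inverse u)^2 * u" using False by (simp add: power2_eq_square)
  moreover have "(inverse u)^2 * u \<in> diag_values S (pfister_list cs)"
    by (rule diag_values_pfister_mult[OF c2 S cs _ u])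
      (rule power2_in_diag_values_pfister[OF S subfield_inverse[OF S uS]])
  ultimately show ?thesis by simp
qed

lemma anisotropic_on_pf_gram_iff:
  "anisotropic_on S (2 ^ length xs) (pf_gram xs) \<longleftrightarrow> diag_anisotropic S (pfister_list xs)"
  unfolding anisotropic_on_def diag_anisotropic_def pf_gram_def
  using bval_diag_gram[of "pfister_list xs"] by simp

text \<open>If \<open>q\<^sub>0 + a q\<^sub>1 = 0\<close> with \<open>q\<^sub>1 \<noteq> 0\<close>, then \<open>a = q\<^sub>0 / q\<^sub>1\<close> would be a value of \<open>\<langle>\<langle>xs\<rangle>\<rangle>\<close>.\<close>

lemma diag_anisotropic_pfister_Cons:
  assumes c2: "CHAR('a::field) = 2" and S: "is_subfield S" and xs: "set xs \<subseteq> S"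
    and an: "diag_anisotropic S (pfister_list xs)"
    and a: "a \<notin> diag_values S (pfister_list (xs :: 'a list))"
  shows "diag_anisotropic S (pfister_list (a # xs))"
  unfolding diag_anisotropic_def
proof (intro allI impI notI, elim conjE)
  let ?m = "2 ^ length xs" and ?d = "pfister_list xs"
  fix v assume v: "vec_on S (length (pfister_list (a # xs))) v"
    and nz: "nonzero_vec (length (pfister_list (a # xs))) v"
    and z: "diag_form (pfister_list (a # xs)) v v = 0"
  let ?q0 = "diag_form ?d v v" and ?q1 = "diag_form ?d (vec_shift ?m v) (vec_shift ?m v)"
  have v0: "vec_on S ?m v" and v1: "vec_on S ?m (vec_shift ?m v)" using v by (auto simp: vec_on_def)
  have q: "?q0 \<in> diag_values S ?d" "?q1 \<in> diag_values S ?d"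
    using v0 v1 by (auto intro: diag_valuesI)
  have "?q0 + a * ?q1 = 0" using z by (simp only: diag_form_pfister_Cons)
  then have "?q0 = - (a * ?q1)" by (simp add: eq_neg_iff_add_eq_0)
  then have q01: "?q0 = a * ?q1" by (simp only: char2_minus_eq[OF c2])
  show False
  proof (cases "?q1 = 0")
    case True
    then have "\<not> nonzero_vec ?m v" "\<not> nonzero_vec ?m (vec_shift ?m v)"
      using q01 an v0 v1 unfolding diag_anisotropic_def by auto
    then show False using nonzero_vec_add_cases[of ?m ?m v] nz by (simp add: mult_2)
  next
    case False
    then have "a = ?q0 * inverse ?q1" using q01 by (simp add: field_simps)
    then have "a \<in> diag_values S ?d"
      using q diag_values_pfister_mult[OF c2 S xs] diag_values_pfister_inverse[OF c2 S xs] by simp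
    then show False using a by blast
  qed
qed

lemma diag_values_pfister_one:
  assumes c2: "CHAR('a::field) = 2" and S: "is_subfield S"
  shows "diag_values S (pfister_list (1 # xs)) = diag_values S (pfister_list (xs :: 'a list))"
proof -
  let ?Q = "diag_values S (pfister_list xs)"
  have "diag_values S (pfister_list (1 # xs)) = {u + 1 * w | u w. u \<in> ?Q \<and> w \<in> ?Q}"
    by (rule diag_values_pfister_Cons[OF S])
  also have "\<dots> = ?Q"
  proof
    show "{u + 1 * w | u w. u \<in> ?Q \<and> w \<in> ?Q} \<subseteq> ?Q" using diag_values_add[OF c2 S] by auto
    show "?Q \<subseteq> {u + 1 * w | u w. u \<in> ?Q \<and> w \<in> ?Q}" using zero_in_diag_values[OF S] by force
  qed
  finally show ?thesis .
qed

lemma diag_values_pfister_ones: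
  assumes c2: "CHAR('a::field) = 2" and S: "is_subfield S"
  shows "diag_values S (pfister_list (replicate r 1 @ bs)) = diag_values S (pfister_list (bs :: 'a list))"
proof (induction r)
  case (Suc r)
  then show ?case
    using diag_values_pfister_one[OF c2 S, of "replicate r 1 @ bs"] by (simp only: replicate_Suc append_Cons)
qed simp

lemma diag_anisotropic_pfister_Nil: "diag_anisotropic S (pfister_list [])"
  by (simp add: diag_anisotropic_def nonzero_vec_def diag_form_def)

lemma pfister_decomposition:
  assumes c2: "CHAR('a::field) = 2" and S: "is_subfield S"
  shows "set as \<subseteq> S - {0} \<Longrightarrow> \<exists>r bs. set bs \<subseteq> S - {0} \<and> r + length bs = length as
     \<and> diag_anisotropic S (pfister_list bs)
     \<and> diag_iso S (pfister_list as) (pfister_list (replicate r 1 @ (bs :: 'a list)))"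
proof (induction as)
  case Nil
  show ?case
    by (intro exI[of _ 0] exI[of _ "[]"]) (simp add: diag_anisotropic_pfister_Nil[simplified] diag_iso_refl)
next
  case (Cons a as)
  obtain r bs where bs: "set bs \<subseteq> S - {0}" and l: "r + length bs = length as"
    and an: "diag_anisotropic S (pfister_list bs)"
    and d: "diag_iso S (pfister_list as) (pfister_list (replicate r 1 @ bs))"
    using Cons by auto
  have aS: "a \<in> S" "a \<noteq> 0" using Cons.prems by auto
  have d1: "diag_iso S (pfister_list (a # as)) (pfister_list (a # replicate r 1 @ bs))"
    using diag_iso_pfister_Cons[OF d] .
  show ?case
  proof (cases "a \<in> diag_values S (pfister_list bs)")
    case True
    let ?D = "pfister_list (replicate r 1 @ bs)"
    have csS: "set (replicate r 1 @ bs) \<subseteq> S" using bs subfield_one[OF S] by auto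
    have "a \<in> diag_values S ?D" using True diag_values_pfister_ones[OF c2 S] by simp
    then have "diag_iso S (map (\<lambda>z. a * z) ?D) ?D" using pfister_round[OF c2 S csS _ aS(2)] by simp
    then have "diag_iso S (?D @ map (\<lambda>z. a * z) ?D) (?D @ ?D)"
      using diag_iso_append diag_iso_refl by blast
    moreover have "map ((*) 1) ?D = ?D" by (rule map_idI) simp
    ultimately have "diag_iso S (pfister_list (a # replicate r 1 @ bs))
        (pfister_list (replicate (Suc r) 1 @ bs))"
      by simp
    then show ?thesis
      using d1 diag_iso_trans bs an l by (intro exI[of _ "Suc r"] exI[of _ bs]) auto
  next
    case False
    have "diag_iso S (pfister_list (a # replicate r 1 @ bs)) (pfister_list (replicate r 1 @ a # bs))"
      using diag_iso_permute[OF mset_pfister_list_move] .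
    moreover have "diag_anisotropic S (pfister_list (a # bs))"
      using diag_anisotropic_pfister_Cons[OF c2 S _ an False] bs by auto
    ultimately show ?thesis
      using d1 diag_iso_trans bs l aS by (intro exI[of _ r] exI[of _ "a # bs"]) auto
  qed
qed


section \<open>A dimension bound for anisotropic diagonal forms\<close>

lemma sum_lessThan_Suc_remove:
  assumes "p < Suc n"
  shows "(\<Sum>k<Suc n. f k) = f p + (\<Sum>i<n. f (if i < p then i else Suc i))"
proof -
  have "(\<Sum>k<Suc n. f k) = f p + (\<Sum>k\<in>{..<Suc n} - {p}. f k)"
    by (rule sum.remove) (use assms in auto)
  also have "(\<Sum>k\<in>{..<Suc n} - {p}. f k) = (\<Sum>i<n. f (if i < p then i else Suc i))"
    by (rule sum.reindex_bij_witness[of _ "\<lambda>i. if i < p then i else Suc i" "\<lambda>k. if k < p then k else k - 1"])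
      (use assms in auto)
  finally show ?thesis .
qed

text \<open>\<open>us i j\<close> is the j-th coordinate of the i-th vector.\<close>

definition lin_independent_on :: "'a::field set \<Rightarrow> nat \<Rightarrow> nat \<Rightarrow> (nat \<Rightarrow> nat \<Rightarrow> 'a) \<Rightarrow> bool" where
  "lin_independent_on S M N us \<longleftrightarrow>
     (\<forall>c. vec_on S N c \<and> (\<forall>j<M. (\<Sum>i<N. c i * us i j) = 0) \<longrightarrow> (\<forall>i<N. c i = 0))"

lemma lin_independent_on_drop_last:
  assumes "lin_independent_on S (Suc M) N us" and "\<forall>i<N. us i M = 0"
  shows "lin_independent_on S M N us"
  unfolding lin_independent_on_def
proof (rule allI, rule impI, elim conjE)
  fix c assume "vec_on S N c" and "\<forall>j<M. (\<Sum>i<N. c i * us i j) = 0"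
  moreover have "(\<Sum>i<N. c i * us i M) = 0" using assms(2) by simp
  ultimately have "\<forall>j<Suc M. (\<Sum>i<N. c i * us i j) = 0" by (auto simp: less_Suc_eq)
  then show "\<forall>i<N. c i = 0" using assms(1) \<open>vec_on S N c\<close> unfolding lin_independent_on_def by blast
qed

text \<open>Gaussian elimination of the last coordinate, using a vector \<open>us p\<close> with \<open>us p M \<noteq> 0\<close>.\<close>

lemma lin_independent_on_eliminate:
  assumes S: "is_subfield S" and us: "\<forall>i<Suc N. vec_on S (Suc M) (us i)"
    and indep: "lin_independent_on S (Suc M) (Suc N) us" and p: "p < Suc N" "us p M \<noteq> 0"
  obtains vs where "\<forall>i<N. vec_on S M (vs i)" and "lin_independent_on S M N vs"
proof -
  define \<sigma> where "\<sigma> i = (if i < p then i else Suc i)" for i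
  have \<sigma>: "\<sigma> i < Suc N" if "i < N" for i using that p by (auto simp: \<sigma>_def)
  define r where "r i = us (\<sigma> i) M / us p M" for i
  define vs where "vs i j = us (\<sigma> i) j - r i * us p j" for i j
  have usS: "us i j \<in> S" if "i < Suc N" "j < Suc M" for i j
    using us that by (auto simp: vec_on_def)
  have rS: "r i \<in> S" if "i < N" for i
    using that \<sigma> p usS unfolding r_def by (auto intro!: subfield_divide[OF S])
  have "\<forall>i<N. vec_on S M (vs i)"
    using \<sigma> p usS rS unfolding vs_def vec_on_def by (auto intro!: subfield_diff[OF S] subfield_mult[OF S])
  moreover have "lin_independent_on S M N vs"
    unfolding lin_independent_on_def
  proof (rule allI, rule impI, elim conjE)
    fix c assume c: "vec_on S N c" and z: "\<forall>j<M. (\<Sum>i<N. c i * vs i j) = 0"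
    define c' where
      "c' k = (if k = p then - (\<Sum>i<N. c i * r i) else if k < p then c k else c (k - 1))" for k
    have c'\<sigma>: "c' (\<sigma> i) = c i" for i unfolding c'_def \<sigma>_def by auto
    have "(\<Sum>i<N. c i * r i) \<in> S"
      using c rS by (auto simp: vec_on_def intro!: subfield_sum[OF S] subfield_mult[OF S])
    then have c'S: "vec_on S (Suc N) c'"
      using c p subfield_uminus[OF S] unfolding vec_on_def c'_def by auto
    have "(\<Sum>k<Suc N. c' k * us k j) = (\<Sum>i<N. c i * vs i j)" for j
    proof -
      have "(\<Sum>k<Suc N. c' k * us k j) = c' p * us p j + (\<Sum>i<N. c' (\<sigma> i) * us (\<sigma> i) j)"
        unfolding \<sigma>_def by (rule sum_lessThan_Suc_remove[OF p(1)])
      then have "(\<Sum>k<Suc N. c' k * us k j) = c' p * us p j + (\<Sum>i<N. c i * us (\<sigma> i) j)"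
        by (simp only: c'\<sigma>)
      then show ?thesis
        unfolding vs_def by (simp add: c'_def sum_distrib_right right_diff_distrib sum_subtractf mult.assoc)
    qed
    moreover have "vs i M = 0" for i unfolding vs_def r_def using p by simp
    ultimately have "\<forall>j<Suc M. (\<Sum>k<Suc N. c' k * us k j) = 0"
      using z by (auto simp: less_Suc_eq)
    then have "\<forall>k<Suc N. c' k = 0" using indep c'S unfolding lin_independent_on_def by blast
    then show "\<forall>i<N. c i = 0" using \<sigma> c'\<sigma> by metis
  qed
  ultimately show ?thesis using that by blast
qed

lemma lin_independent_on_le:
  assumes "is_subfield S"
  shows "\<forall>i<N. vec_on S M (us i) \<Longrightarrow> lin_independent_on S M N us \<Longrightarrow> N \<le> M"
proof (induction M arbitrary: N us)
  case 0
  have "vec_on S N (\<lambda>i. 1)" using subfield_one[OF assms] by (simp add: vec_on_def)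
  show ?case
  proof (rule ccontr)
    assume "\<not> N \<le> 0"
    then have "(1::'a) = 0"
      using \<open>vec_on S N (\<lambda>i. 1)\<close> "0.prems"(2) unfolding lin_independent_on_def by auto
    then show False by simp
  qed
next
  case (Suc M)
  show ?case
  proof (cases "\<forall>i<N. us i M = 0")
    case True
    then have "lin_independent_on S M N us" by (rule lin_independent_on_drop_last[OF Suc.prems(2)])
    moreover have "\<forall>i<N. vec_on S M (us i)" using Suc.prems(1) by (auto simp: vec_on_def)
    ultimately have "N \<le> M" using Suc.IH by blast
    then show ?thesis by simp
  next
    case False
    then obtain p where p: "p < N" "us p M \<noteq> 0" by auto
    then obtain N' where N: "N = Suc N'" by (cases N) auto
    obtain vs where "\<forall>i<N'. vec_on S M (vs i)" "lin_independent_on S M N' vs"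
      using lin_independent_on_eliminate[OF assms, of N' M us p] Suc.prems p N by blast
    then have "N' \<le> M" using Suc.IH by blast
    then show ?thesis using N by simp
  qed
qed

text \<open>Choosing \<open>u\<^sub>i\<close> with \<open>\<langle>d'\<rangle>(u\<^sub>i) = d\<^sub>i\<close>, a relation \<open>\<Sum> c\<^sub>i u\<^sub>i = 0\<close> gives
  \<open>0 = \<langle>d'\<rangle>(\<Sum> c\<^sub>i u\<^sub>i) = \<Sum> c\<^sub>i\<^sup>2 d\<^sub>i = \<langle>d\<rangle>(c)\<close>, since squaring is additive; so the \<open>u\<^sub>i\<close>
  are independent.\<close>

lemma diag_anisotropic_length_le:
  assumes c2: "CHAR('a::field) = 2" and S: "is_subfield S" and an: "diag_anisotropic S d"
    and sub: "diag_values S d \<subseteq> diag_values S (d' :: 'a list)"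
  shows "length d \<le> length d'"
proof -
  let ?N = "length d" and ?M = "length d'"
  have "\<exists>w. vec_on S ?M w \<and> diag_form d' w w = d ! i" if "i < ?N" for i
  proof -
    have "d ! i \<in> diag_values S d"
      using diag_form_unit_vec[OF that] vec_on_unit_vec[OF S] by (intro diag_valuesI)
    then have "d ! i \<in> diag_values S d'" using sub by blast
    then show ?thesis unfolding diag_values_def by auto
  qed
  then obtain u where u: "\<And>i. i < ?N \<Longrightarrow> vec_on S ?M (u i) \<and> diag_form d' (u i) (u i) = d ! i"
    by metis
  have "lin_independent_on S ?M ?N u"
    unfolding lin_independent_on_def
  proof (rule allI, rule impI, elim conjE)
    fix c assume c: "vec_on S ?N c" and z: "\<forall>j<?M. (\<Sum>i<?N. c i * u i j) = 0"
    have "d ! i = (\<Sum>j<?M. (u i j)^2 * d' ! j)" if "i < ?N" for i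
      using u[OF that] by (simp add: diag_form_diag)
    then have "diag_form d c c = (\<Sum>i<?N. (c i)^2 * (\<Sum>j<?M. (u i j)^2 * d' ! j))"
      unfolding diag_form_diag by simp
    also have "\<dots> = (\<Sum>j<?M. (\<Sum>i<?N. c i * u i j)^2 * d' ! j)"
      by (simp add: char2_power2_sum[OF c2] sum_distrib_left sum_distrib_right power_mult_distrib
          mult_ac sum.swap[of _ "{..<?M}"])
    also have "\<dots> = 0" using z by simp
    finally show "\<forall>i<?N. c i = 0" using an c unfolding diag_anisotropic_def nonzero_vec_def by blast
  qed
  then show ?thesis using lin_independent_on_le[OF S] u by blast
qed


section \<open>The index is determined by the value set\<close>

lemma Q_on_pf_gram: "is_subfield S \<Longrightarrow> Q_on S (2 ^ length as) (pf_gram as) = diag_values S (pfister_list as)"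
  using Q_on_diag_gram[of S "pfister_list as"] by (simp add: pf_gram_def)

lemma diag_values_of_decomposition:
  assumes "CHAR('a::field) = 2" and "is_subfield S"
    and "diag_iso S (pfister_list as) (pfister_list (replicate r 1 @ (bs :: 'a list)))"
  shows "diag_values S (pfister_list as) = diag_values S (pfister_list bs)"
  using diag_values_diag_iso[OF assms(3)] diag_values_pfister_ones[OF assms(1,2)] by simp

lemma pfister_anisotropic_part_exists:
  assumes "CHAR('a::field) = 2" and "is_subfield S" and "set (as :: 'a list) \<subseteq> S - {0}"
  obtains bs where "diag_anisotropic S (pfister_list bs)"
    and "diag_values S (pfister_list bs) = diag_values S (pfister_list as)"
  using pfister_decomposition[OF assms] diag_values_of_decomposition[OF assms(1,2)] by metis

lemma pfister_length_eq_of_diag_values: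
  assumes "CHAR('a::field) = 2" and "is_subfield S"
    and "diag_anisotropic S (pfister_list bs)" and "diag_anisotropic S (pfister_list bs')"
    and "diag_values S (pfister_list bs) = diag_values S (pfister_list (bs' :: 'a list))"
  shows "length bs = length bs'"
proof -
  have "length (pfister_list bs) \<le> length (pfister_list bs')"
    by (rule diag_anisotropic_length_le[OF assms(1-3)]) (use assms(5) in blast)
  moreover have "length (pfister_list bs') \<le> length (pfister_list bs)"
    by (rule diag_anisotropic_length_le[OF assms(1,2,4)]) (use assms(5) in blast)
  ultimately have "(2::nat) ^ length bs = 2 ^ length bs'" by simp
  then show ?thesis by simp
qed

lemma pf_index_eq:
  assumes c2: "CHAR('a::field) = 2" and S: "is_subfield S" and as: "set as \<subseteq> S - {0}"
    and an: "diag_anisotropic S (pfister_list bs)"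
    and val: "diag_values S (pfister_list bs) = diag_values S (pfister_list (as :: 'a list))"
  shows "pf_index S as + length bs = length as"
proof -
  obtain r bs0 where bs0: "set bs0 \<subseteq> S - {0}" and l: "r + length bs0 = length as"
    and an0: "diag_anisotropic S (pfister_list bs0)"
    and d: "diag_iso S (pfister_list as) (pfister_list (replicate r 1 @ bs0))"
    using pfister_decomposition[OF c2 S as] by blast
  have val0: "diag_values S (pfister_list bs0) = diag_values S (pfister_list as)"
    using diag_values_of_decomposition[OF c2 S d] by simp
  have "pf_index S as = r"
    unfolding pf_index_def
  proof (rule the_equality)
    show "\<exists>bs. set bs \<subseteq> S - {0} \<and> r + length bs = length as \<and>
        anisotropic_on S (2 ^ length bs) (pf_gram bs) \<and>
        iso_on S (2 ^ length as) (pf_gram as) (pf_gram (replicate r 1 @ bs))"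
      using bs0 l an0 diag_iso_into_iso_on[OF S d]
      by (intro exI[of _ bs0]) (simp add: anisotropic_on_pf_gram_iff pf_gram_def[of as]
          pf_gram_def[of "replicate r 1 @ bs0"])
  next
    fix r' assume "\<exists>bs. set bs \<subseteq> S - {0} \<and> r' + length bs = length as \<and>
        anisotropic_on S (2 ^ length bs) (pf_gram bs) \<and>
        iso_on S (2 ^ length as) (pf_gram as) (pf_gram (replicate r' 1 @ bs))"
    then obtain bs' where l': "r' + length bs' = length as"
      and an': "diag_anisotropic S (pfister_list bs')"
      and i': "iso_on S (2 ^ length as) (pf_gram as) (pf_gram (replicate r' 1 @ bs'))"
      by (auto simp: anisotropic_on_pf_gram_iff)
    have "diag_iso S (pfister_list as) (pfister_list (replicate r' 1 @ bs'))"
      using iso_on_into_diag_iso[OF S, of "pfister_list as" "pfister_list (replicate r' 1 @ bs')"] i' l'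
      by (simp add: pf_gram_def)
    then have "length bs' = length bs0"
      using pfister_length_eq_of_diag_values[OF c2 S an' an0] val0
        diag_values_of_decomposition[OF c2 S] by metis
    then show "r' = r" using l l' by simp
  qed
  moreover have "length bs = length bs0"
    using pfister_length_eq_of_diag_values[OF c2 S an an0] val val0 by simp
  ultimately show ?thesis using l by simp
qed


section \<open>Adjoining a square root\<close>

lemma mult_in_sqrt_ext:
  assumes F: "is_subfield F" and a: "\<alpha> \<in> F" and s: "s ^ 2 = (\<alpha>::'a::field)"
    and z: "z \<in> {x + y * s | x y. x \<in> F \<and> y \<in> F}"
    and z': "z' \<in> {x + y * s | x y. x \<in> F \<and> y \<in> F}"
  shows "z * z' \<in> {x + y * s | x y. x \<in> F \<and> y \<in> F}"
proof -
  obtain x y x' y' where xy: "x \<in> F" "y \<in> F" "x' \<in> F" "y' \<in> F" "z = x + y * s" "z' = x' + y' * s"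
    using z z' by blast
  have "z * z' = (x * x' + y * y' * \<alpha>) + (x * y' + y * x') * s"
    unfolding xy(5,6) s[symmetric] by (simp add: algebra_simps power2_eq_square)
  then show ?thesis using xy a
    by (intro CollectI exI[of _ "x * x' + y * y' * \<alpha>"] exI[of _ "x * y' + y * x'"])
      (auto simp: subfield_add[OF F] subfield_mult[OF F])
qed

text \<open>In characteristic two \<open>(x + y s)\<^sup>2 = x\<^sup>2 + y\<^sup>2 \<alpha>\<close> lies in F, so \<open>z\<inverse> = z / z\<^sup>2\<close>.\<close>

lemma inverse_in_sqrt_ext:
  assumes c2: "CHAR('a::field) = 2" and F: "is_subfield F" and a: "\<alpha> \<in> F" and s: "s ^ 2 = (\<alpha>::'a)"
    and z: "z \<in> {x + y * s | x y. x \<in> F \<and> y \<in> F}"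
  shows "inverse z \<in> {x + y * s | x y. x \<in> F \<and> y \<in> F}"
proof -
  obtain x y where xy: "x \<in> F" "y \<in> F" "z = x + y * s" using z by blast
  define n where "n = x^2 + y^2 * \<alpha>"
  have n: "z^2 = n" unfolding xy(3) n_def s[symmetric]
    by (simp add: char2_power2_add[OF c2] power_mult_distrib)
  have "n \<in> F"
    using xy a unfolding n_def by (auto simp: subfield_add[OF F] subfield_mult[OF F] power2_eq_square)
  moreover have "inverse z = z * inverse (z^2)"
    by (cases "z = 0") (simp_all add: power2_eq_square)
  then have "inverse z = x * inverse n + (y * inverse n) * s"
    unfolding n by (simp add: xy(3) algebra_simps)
  ultimately show ?thesis using xy
    by (intro CollectI exI[of _ "x * inverse n"] exI[of _ "y * inverse n"])
      (auto simp: subfield_mult[OF F] subfield_inverse[OF F])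
qed

lemma subfield_sqrt_ext:
  assumes c2: "CHAR('a::field) = 2" and F: "is_subfield F" and a: "\<alpha> \<in> F" and s: "s ^ 2 = (\<alpha>::'a)"
  shows "is_subfield {x + y * s | x y. x \<in> F \<and> y \<in> F}"
  unfolding is_subfield_def
proof (intro conjI ballI impI)
  let ?T = "{x + y * s | x y. x \<in> F \<and> y \<in> F}"
  show "0 \<in> ?T" "1 \<in> ?T" using subfield_zero[OF F] subfield_one[OF F] by force+
  show "z + z' \<in> ?T" if hz: "z \<in> ?T" "z' \<in> ?T" for z z'
  proof -
    obtain x y x' y' where "x \<in> F" "y \<in> F" "x' \<in> F" "y' \<in> F" "z = x + y * s" "z' = x' + y' * s"
      using hz by blast
    then show ?thesis
      by (intro CollectI exI[of _ "x + x'"] exI[of _ "y + y'"]) (auto simp: subfield_add[OF F] algebra_simps)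
  qed
  show "z * z' \<in> ?T" if "z \<in> ?T" "z' \<in> ?T" for z z'
    using mult_in_sqrt_ext[OF F a s that] .
  show "- z \<in> ?T" if hz: "z \<in> ?T" for z
  proof -
    obtain x y where "x \<in> F" "y \<in> F" "z = x + y * s" using hz by blast
    then show ?thesis
      by (intro CollectI exI[of _ "- x"] exI[of _ "- y"]) (auto simp: subfield_uminus[OF F] algebra_simps)
  qed
  show "inverse z \<in> ?T" if "z \<in> ?T" for z
    using inverse_in_sqrt_ext[OF c2 F a s that] .
qed

lemma adjoin_sqrt_eq:
  assumes c2: "CHAR('a::field) = 2" and F: "is_subfield F" and a: "\<alpha> \<in> F" and s: "s ^ 2 = (\<alpha>::'a)"
  shows "adjoin F s = {x + y * s | x y. x \<in> F \<and> y \<in> F}"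
proof
  let ?T = "{x + y * s | x y. x \<in> F \<and> y \<in> F}"
  have "F \<subseteq> ?T" "s \<in> ?T" using subfield_zero[OF F] subfield_one[OF F] by force+
  then show "adjoin F s \<subseteq> ?T"
    unfolding adjoin_def using subfield_sqrt_ext[OF assms] by (intro Inter_lower) simp
  have "?T \<subseteq> T" if "is_subfield T" "F \<subseteq> T" "s \<in> T" for T
    using that subfield_add[OF that(1)] subfield_mult[OF that(1)] by blast
  then show "?T \<subseteq> adjoin F s" unfolding adjoin_def by (intro Inter_greatest) simp
qed

lemma subfield_adjoin_sqrt:
  assumes "CHAR('a::field) = 2" and "is_subfield F" and "\<alpha> \<in> F" and "s ^ 2 = (\<alpha>::'a)"
  shows "is_subfield (adjoin F s)"
  unfolding adjoin_sqrt_eq[OF assms] by (rule subfield_sqrt_ext[OF assms])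

lemma subset_adjoin: "F \<subseteq> adjoin F s"
  unfolding adjoin_def by blast

lemma diag_form_sqrt_combination:
  assumes c2: "CHAR('a::field) = 2" and s: "s ^ 2 = (\<alpha>::'a)"
  shows "diag_form d (\<lambda>i. x i + y i * s) (\<lambda>i. x i + y i * s) = diag_form d x x + \<alpha> * diag_form d y y"
  unfolding diag_form_diag
  by (simp add: char2_power2_add[OF c2] power_mult_distrib s sum.distrib sum_distrib_left algebra_simps)

lemma diag_values_adjoin_sqrt:
  assumes c2: "CHAR('a::field) = 2" and F: "is_subfield F" and a: "\<alpha> \<in> F" and s: "s ^ 2 = (\<alpha>::'a)"
  shows "diag_values (adjoin F s) d = {u + \<alpha> * w | u w. u \<in> diag_values F d \<and> w \<in> diag_values F d}"
proof (intro set_eqI iffI)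
  let ?m = "length d"
  note K = adjoin_sqrt_eq[OF assms]
  fix z assume "z \<in> diag_values (adjoin F s) d"
  then obtain v where v: "vec_on (adjoin F s) ?m v" and z: "z = diag_form d v v"
    unfolding diag_values_def by blast
  have "\<forall>i<?m. \<exists>x y. x \<in> F \<and> y \<in> F \<and> v i = x + y * s"
    using v unfolding vec_on_def K by blast
  then obtain x y where xy: "\<And>i. i < ?m \<Longrightarrow> x i \<in> F \<and> y i \<in> F \<and> v i = x i + y i * s"
    by metis
  have "z = diag_form d (\<lambda>i. x i + y i * s) (\<lambda>i. x i + y i * s)"
    unfolding z using xy by (intro diag_form_cong) auto
  also have "\<dots> = diag_form d x x + \<alpha> * diag_form d y y"
    by (rule diag_form_sqrt_combination[OF c2 s])
  finally show "z \<in> {u + \<alpha> * w | u w. u \<in> diag_values F d \<and> w \<in> diag_values F d}"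
    using xy unfolding diag_values_def vec_on_def by blast
next
  let ?m = "length d"
  fix z assume "z \<in> {u + \<alpha> * w | u w. u \<in> diag_values F d \<and> w \<in> diag_values F d}"
  then obtain x y where xy: "vec_on F ?m x" "vec_on F ?m y"
    and z: "z = diag_form d x x + \<alpha> * diag_form d y y"
    unfolding diag_values_def by blast
  have "vec_on (adjoin F s) ?m (\<lambda>i. x i + y i * s)"
    using xy unfolding vec_on_def adjoin_sqrt_eq[OF assms] by blast
  then show "z \<in> diag_values (adjoin F s) d"
    by (rule diag_valuesI) (simp add: z diag_form_sqrt_combination[OF c2 s])
qed

lemma diag_values_pfister_adjoin_sqrt:
  assumes c2: "CHAR('a::field) = 2" and F: "is_subfield F" and cs: "set cs \<subseteq> F"
    and a: "\<alpha> \<in> diag_values F (pfister_list cs)" and s: "s ^ 2 = (\<alpha>::'a)"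
  shows "diag_values (adjoin F s) (pfister_list cs) = diag_values F (pfister_list cs)"
proof -
  let ?Q = "diag_values F (pfister_list cs)"
  have "\<alpha> \<in> F" using a diag_values_subset[OF F pfister_list_subset[OF F cs]] by blast
  then have "diag_values (adjoin F s) (pfister_list cs) = {u + \<alpha> * w | u w. u \<in> ?Q \<and> w \<in> ?Q}"
    using diag_values_adjoin_sqrt[OF c2 F _ s] by blast
  also have "\<dots> = ?Q"
  proof
    show "{u + \<alpha> * w | u w. u \<in> ?Q \<and> w \<in> ?Q} \<subseteq> ?Q"
      using a diag_values_add[OF c2 F] diag_values_pfister_mult[OF c2 F cs] by blast
    show "?Q \<subseteq> {u + \<alpha> * w | u w. u \<in> ?Q \<and> w \<in> ?Q}"
      using zero_in_diag_values[OF F] by force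
  qed
  finally show ?thesis .
qed

text \<open>A nonzero F-vector (v, w) with \<open>\<langle>d\<rangle>(v) + \<alpha>\<langle>d\<rangle>(w) = 0\<close> would give the \<open>F(s)\<close>-vector
  \<open>v + s w\<close> with \<open>\<langle>d\<rangle>(v + s w) = 0\<close>, which is nonzero because \<open>s \<notin> F\<close>.\<close>

lemma diag_anisotropic_adjoin_sqrt:
  assumes c2: "CHAR('a::field) = 2" and F: "is_subfield F" and a: "\<alpha> \<in> F" and s: "s ^ 2 = (\<alpha>::'a)"
    and sF: "s \<notin> F" and an: "diag_anisotropic (adjoin F s) d"
  shows "diag_anisotropic F (d @ map (\<lambda>x. \<alpha> * x) d)"
  unfolding diag_anisotropic_def
proof (intro allI impI notI, elim conjE)
  let ?m = "length d"
  fix v assume v: "vec_on F (length (d @ map ((*) \<alpha>) d)) v"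
    and nz: "nonzero_vec (length (d @ map ((*) \<alpha>) d)) v"
    and z: "diag_form (d @ map ((*) \<alpha>) d) v v = 0"
  have vF: "v i \<in> F" "v (i + ?m) \<in> F" if "i < ?m" for i
    using v that unfolding vec_on_def by auto
  define w where "w i = v i + v (i + ?m) * s" for i
  have "diag_form d w w = diag_form d v v + \<alpha> * diag_form d (vec_shift ?m v) (vec_shift ?m v)"
    unfolding w_def vec_shift_def by (rule diag_form_sqrt_combination[OF c2 s])
  then have "diag_form d w w = 0"
    using z by (simp add: diag_form_append diag_form_map_mult)
  moreover have "vec_on (adjoin F s) ?m w"
    unfolding vec_on_def w_def adjoin_sqrt_eq[OF c2 F a s] using vF by blast
  ultimately have w0: "v i + v (i + ?m) * s = 0" if "i < ?m" for i
    using an that unfolding diag_anisotropic_def nonzero_vec_def w_def by blast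
  have v0: "v i = 0 \<and> v (i + ?m) = 0" if i: "i < ?m" for i
  proof (cases "v (i + ?m) = 0")
    case False
    then have "s = - v i / v (i + ?m)" using w0[OF i] by (simp add: field_simps eq_neg_iff_add_eq_0)
    then have "s \<in> F" using vF[OF i] subfield_divide[OF F] subfield_uminus[OF F] by simp
    then show ?thesis using sF by simp
  qed (use w0[OF i] in simp)
  obtain j where j: "j < ?m + ?m" "v j \<noteq> 0" using nz unfolding nonzero_vec_def by auto
  show False
  proof (cases "j < ?m")
    case False
    then have "j - ?m < ?m" "j - ?m + ?m = j" using j by auto
    then show False using v0[of "j - ?m"] j by simp
  qed (use v0[of j] j in simp)
qed


theorem lemma4p11:
  fixes F :: "'a::field set" and as :: "'a list" and \<alpha> s :: 'a
  assumes "CHAR('a) = 2"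
    and "is_subfield F"
    and "set as \<subseteq> F - {0}"
    and "\<alpha> \<in> Q_on F (2 ^ length as) (pf_gram as)"
    and "\<alpha> \<notin> {x ^ 2 | x. x \<in> F}"
    and "s ^ 2 = \<alpha>"
  shows "pf_index (adjoin F s) as = pf_index F as + 1"
proof -
  note c2 = assms(1) and F = assms(2) and as = assms(3) and s = assms(6)
  let ?K = "adjoin F s"
  have asF: "set as \<subseteq> F" using as by blast
  have aQ: "\<alpha> \<in> diag_values F (pfister_list as)" using assms(4) Q_on_pf_gram[OF F] by simp
  have aF: "\<alpha> \<in> F" using aQ diag_values_subset[OF F pfister_list_subset[OF F asF]] by blast
  have sF: "s \<notin> F" using assms(5) s by blast
  have K: "is_subfield ?K" by (rule subfield_adjoin_sqrt[OF c2 F aF s])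
  have asK: "set as \<subseteq> ?K - {0}" using as subset_adjoin[of F s] by blast
  obtain c where anK: "diag_anisotropic ?K (pfister_list c)"
    and valK: "diag_values ?K (pfister_list c) = diag_values ?K (pfister_list as)"
    using pfister_anisotropic_part_exists[OF c2 K asK] by blast
  have "diag_values F (pfister_list (\<alpha> # c)) = diag_values ?K (pfister_list c)"
    using diag_values_pfister_Cons[OF F] diag_values_adjoin_sqrt[OF c2 F aF s] by simp
  also have "\<dots> = diag_values F (pfister_list as)"
    using valK diag_values_pfister_adjoin_sqrt[OF c2 F asF aQ s] by simp
  finally have valF: "diag_values F (pfister_list (\<alpha> # c)) = diag_values F (pfister_list as)" .
  have anF: "diag_anisotropic F (pfister_list (\<alpha> # c))"
    using diag_anisotropic_adjoin_sqrt[OF c2 F aF s sF anK] by simp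
  show ?thesis
    using pf_index_eq[OF c2 F as anF valF] pf_index_eq[OF c2 K asK anK valK] by simp
qed

end
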